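(* Take $p\in [1,\infty)$ and $0<\alpha\le1$. Let $\Omega\subset \mathbb{R}^N$ be a bounded domain with boundary $\Gamma$ of class $C^2$. If $v\in\Sigma_\alpha(\Omega)$, then \[ \max_{\Gamma} v - \min_{\Gamma} v \le K\, [v]_{\alpha,\Omega}^{ \frac{N}{N+ \alpha \, p} } \, \Vert v-v_{\Omega}\Vert_{p, \Omega}^\frac{\alpha p}{N+ \alpha p} \] for some optimal constant $K$. Moreover, \[ K\le \max\left[ 2 \left( 1 +\frac{ \alpha p}{N} \right) ,\left(\frac{d_\Omega}{r_i}\right)^\alpha\right]\left( \frac{N}{\alpha p}\right)^{\frac{\alpha p}{N+ \alpha p}}\,\left( \frac{C}{c} \right)^\frac{\alpha N}{N+\alpha p}. \]
   Context: Let $N\ge 2$. Let $A(x)$ be a symmetric $N\times N$ matrix with measurable entries satisfying $\lambda|\xi|^2\le\langle A(x)\xi,\xi\rangle\le\Lambda|\xi|^2$ for all $x$ and $\xi\in\mathbb{R}^N$, with $\lambda,\Lambda>0$, and let $Lv=\mathrm{div}[A(x)\nabla v]$. For the bounded domain $\Omega$ with diameter $d_\Omega$: $\Vert v\Vert_{p,\Omega}$ is the $L^p$-norm of $v$ with respect to the normalized measure $dx/|\Omega|$; $v_\Omega$ is the mean value of $v$ on $\Omega$; $[v]_{\alpha,\Omega}=\sup\{(d_\Omega/2)^\alpha|v(x_1)-v(x_2)|/|x_1-x_2|^\alpha : x_1,x_2\in\overline\Omega,\ x_1\ne x_2\}$; and $\Sigma_\alpha(\Omega)$ is the set of weak solutions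 $v\in C^{0,\alpha}(\overline\Omega)$ of $Lv=0$ in $\Omega$. $r_i>0$ is the radius of the uniform interior sphere condition: for each $z\in\Gamma$ there is a ball of radius $r_i$ contained in $\Omega$ whose closure meets $\Gamma$ only at $z$. The constants $c\le C$, depending only on $N,\lambda,\Lambda$, are those of the mean value property for $L$ (Caffarelli; Blank–Hao): for $x_0\in\Omega$ and $0<r<r_0$ with $r_0\ge\mathrm{dist}(x_0,\Gamma)/C$ there are increasing domains $D_r(x_0)$ with $B_{cr}(x_0)\subset D_r(x_0)\subset B_{Cr}(x_0)$ such that every $v$ with $Lv\ge0$ satisfies $v(x_0)\le |D_r(x_0)|^{-1}\int_{D_r(x_0)}v\le |D_\rho(x_0)|^{-1}\int_{D_\rho(x_0)}v$ for $0<r<\rho<r_0$. *)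

theory Defs
  imports "HOL-Analysis.Analysis"
begin

definition pd :: "'n::finite \<Rightarrow> (real^'n \<Rightarrow> real) \<Rightarrow> real^'n \<Rightarrow> real" where
  "pd i f x = deriv (\<lambda>t. f (x + t *\<^sub>R axis i 1)) 0"

fun iter_pd :: "'n::finite list \<Rightarrow> (real^'n \<Rightarrow> real) \<Rightarrow> real^'n \<Rightarrow> real" where
  "iter_pd [] f = f"
| "iter_pd (i # is) f = pd i (iter_pd is f)"

definition smooth :: "(real^'n::finite \<Rightarrow> real) \<Rightarrow> bool" where
  "smooth f \<longleftrightarrow> (\<forall>is. continuous_on UNIV (iter_pd is f) \<and>
      (\<forall>i x. (\<lambda>t. iter_pd is f (x + t *\<^sub>R axis i 1)) differentiable (at 0)))"

definition grad :: "(real^'n::finite \<Rightarrow> real) \<Rightarrow> real^'n \<Rightarrow> real^'n" where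
  "grad f x = (\<chi> i. pd i f x)"

definition test_fun :: "(real^'n::finite) set \<Rightarrow> (real^'n \<Rightarrow> real) \<Rightarrow> bool" where
  "test_fun \<Omega> \<phi> \<longleftrightarrow> smooth \<phi> \<and> compact (closure {x. \<phi> x \<noteq> 0}) \<and> closure {x. \<phi> x \<noteq> 0} \<subseteq> \<Omega>"

definition L2_loc :: "(real^'n::finite) set \<Rightarrow> (real^'n \<Rightarrow> real) \<Rightarrow> bool" where
  "L2_loc \<Omega> f \<longleftrightarrow> (\<forall>K. compact K \<and> K \<subseteq> \<Omega> \<longrightarrow>
      set_integrable lebesgue K f \<and> set_integrable lebesgue K (\<lambda>x. (f x)\<^sup>2))"

definition H1_loc_grad :: "(real^'n::finite) set \<Rightarrow> (real^'n \<Rightarrow> real) \<Rightarrow> (real^'n \<Rightarrow> real^'n) \<Rightarrow> bool" where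
  "H1_loc_grad \<Omega> v g \<longleftrightarrow> L2_loc \<Omega> v \<and> (\<forall>i. L2_loc \<Omega> (\<lambda>x. g x $ i)) \<and>
     (\<forall>\<phi> i. test_fun \<Omega> \<phi> \<longrightarrow>
        (LINT x:\<Omega>|lebesgue. v x * pd i \<phi> x) = - (LINT x:\<Omega>|lebesgue. g x $ i * \<phi> x))"

text \<open>Weak solutions of L v = div(A grad v) = 0 and weak subsolutions (L v \<ge> 0).\<close>
definition weak_solution :: "(real^'n::finite \<Rightarrow> real^'n^'n) \<Rightarrow> (real^'n) set \<Rightarrow> (real^'n \<Rightarrow> real) \<Rightarrow> bool" where
  "weak_solution A \<Omega> v \<longleftrightarrow> (\<exists>g. H1_loc_grad \<Omega> v g \<and>
     (\<forall>\<phi>. test_fun \<Omega> \<phi> \<longrightarrow> (LINT x:\<Omega>|lebesgue. (A x *v g x) \<bullet> grad \<phi> x) = 0))"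

definition weak_subsolution :: "(real^'n::finite \<Rightarrow> real^'n^'n) \<Rightarrow> (real^'n) set \<Rightarrow> (real^'n \<Rightarrow> real) \<Rightarrow> bool" where
  "weak_subsolution A \<Omega> v \<longleftrightarrow> (\<exists>g. H1_loc_grad \<Omega> v g \<and>
     (\<forall>\<phi>. test_fun \<Omega> \<phi> \<and> (\<forall>x. \<phi> x \<ge> 0) \<longrightarrow> (LINT x:\<Omega>|lebesgue. (A x *v g x) \<bullet> grad \<phi> x) \<le> 0))"

definition elliptic_coeffs :: "(real^'n::finite \<Rightarrow> real^'n^'n) \<Rightarrow> real \<Rightarrow> real \<Rightarrow> bool" where
  "elliptic_coeffs A lam Lam \<longleftrightarrow> 0 < lam \<and> 0 < Lam \<and>
     (\<forall>i j. (\<lambda>x. A x $ i $ j) \<in> borel_measurable lebesgue) \<and>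
     (\<forall>x. transpose (A x) = A x) \<and>
     (\<forall>x \<xi>. lam * (norm \<xi>)\<^sup>2 \<le> \<xi> \<bullet> (A x *v \<xi>) \<and> \<xi> \<bullet> (A x *v \<xi>) \<le> Lam * (norm \<xi>)\<^sup>2)"

definition bounded_domain :: "(real^'n::finite) set \<Rightarrow> bool" where
  "bounded_domain \<Omega> \<longleftrightarrow> open \<Omega> \<and> connected \<Omega> \<and> bounded \<Omega> \<and> \<Omega> \<noteq> {}"

definition C2_on :: "(real^'n::finite) set \<Rightarrow> (real^'n \<Rightarrow> real) \<Rightarrow> (real^'n \<Rightarrow> real^'n) \<Rightarrow> bool" where
  "C2_on U \<rho> g \<longleftrightarrow> (\<exists>H :: real^'n \<Rightarrow> real^'n^'n.
     (\<forall>x\<in>U. (\<rho> has_derivative (\<lambda>h. g x \<bullet> h)) (at x) \<and> (g has_derivative (\<lambda>h. H x *v h)) (at x))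
     \<and> continuous_on U H)"

definition C2_boundary :: "(real^'n::finite) set \<Rightarrow> bool" where
  "C2_boundary \<Omega> \<longleftrightarrow> (\<forall>z\<in>frontier \<Omega>. \<exists>U \<rho> g. open U \<and> z \<in> U \<and> C2_on U \<rho> g \<and>
      (\<forall>x\<in>U. g x \<noteq> 0) \<and> \<Omega> \<inter> U = {x\<in>U. \<rho> x < 0})"

definition interior_sphere_radius :: "(real^'n::finite) set \<Rightarrow> real \<Rightarrow> bool" where
  "interior_sphere_radius \<Omega> r \<longleftrightarrow> 0 < r \<and>
     (\<forall>z\<in>frontier \<Omega>. \<exists>y. ball y r \<subseteq> \<Omega> \<and> closure (ball y r) \<inter> frontier \<Omega> = {z})"

definition avg :: "(real^'n::finite) set \<Rightarrow> (real^'n \<Rightarrow> real) \<Rightarrow> real" where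
  "avg D w = (LINT x:D|lebesgue. w x) / measure lebesgue D"

definition nLp_norm :: "real \<Rightarrow> (real^'n::finite) set \<Rightarrow> (real^'n \<Rightarrow> real) \<Rightarrow> real" where
  "nLp_norm p \<Omega> w = ((LINT x:\<Omega>|lebesgue. \<bar>w x\<bar> powr p) / measure lebesgue \<Omega>) powr (1 / p)"

definition holder_on :: "real \<Rightarrow> (real^'n::finite) set \<Rightarrow> (real^'n \<Rightarrow> real) \<Rightarrow> bool" where
  "holder_on \<alpha> S v \<longleftrightarrow> continuous_on S v \<and>
     (\<exists>M. \<forall>x\<in>S. \<forall>y\<in>S. \<bar>v x - v y\<bar> \<le> M * dist x y powr \<alpha>)"

definition holder_seminorm :: "real \<Rightarrow> (real^'n::finite) set \<Rightarrow> (real^'n \<Rightarrow> real) \<Rightarrow> real" where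
  "holder_seminorm \<alpha> \<Omega> v = Sup {(diameter \<Omega> / 2) powr \<alpha> * \<bar>v x1 - v x2\<bar> / dist x1 x2 powr \<alpha> | x1 x2.
      x1 \<in> closure \<Omega> \<and> x2 \<in> closure \<Omega> \<and> x1 \<noteq> x2}"

definition Sigma_set :: "(real^'n::finite \<Rightarrow> real^'n^'n) \<Rightarrow> real \<Rightarrow> (real^'n) set \<Rightarrow> (real^'n \<Rightarrow> real) set" where
  "Sigma_set A \<alpha> \<Omega> = {v. holder_on \<alpha> (closure \<Omega>) v \<and> weak_solution A \<Omega> v}"

section \<open>Mean value property (Caffarelli; Blank--Hao) with constants c \<le> C\<close>

definition mean_value_property ::
  "(real^'n::finite \<Rightarrow> real^'n^'n) \<Rightarrow> (real^'n) set \<Rightarrow> real \<Rightarrow> real \<Rightarrow> bool" where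
  "mean_value_property A \<Omega> c C \<longleftrightarrow> 0 < c \<and> c \<le> C \<and>
    (\<forall>x0\<in>\<Omega>. \<exists>D :: real \<Rightarrow> (real^'n) set.
       (\<forall>r. 0 < r \<and> r < infdist x0 (frontier \<Omega>) / C \<longrightarrow>
            D r \<in> sets lebesgue \<and> ball x0 (c * r) \<subseteq> D r \<and> D r \<subseteq> ball x0 (C * r)) \<and>
       (\<forall>r \<rho>. 0 < r \<and> r < \<rho> \<and> \<rho> < infdist x0 (frontier \<Omega>) / C \<longrightarrow> D r \<subseteq> D \<rho>) \<and>
       (\<forall>w. continuous_on \<Omega> w \<and> weak_subsolution A \<Omega> w \<longrightarrow>
          (\<forall>r \<rho>. 0 < r \<and> r < \<rho> \<and> \<rho> < infdist x0 (frontier \<Omega>) / C \<longrightarrow>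
             w x0 \<le> avg (D r) w \<and> avg (D r) w \<le> avg (D \<rho>) w)))"

end

theory Submission
  imports Defs
begin

text \<open>
  At a boundary point z, move a distance t = s d/2 (d the diameter) into the interior ball at z,
  to a point x0 with B(x0, t) contained in Omega. The Hoelder seminorm bounds |v(z) - v(x0)| by
  [v] s^alpha. For the solutions v and -v, the mean value property on the domains D_r(x0),
  r < t/C, together with Hoelder's inequality bounds |v(x0) - v_Omega| by
  (|Omega| / |D_r|)^(1/p) ||v - v_Omega||_p, and the isodiametric inequality
  |Omega| <= omega_N (d/2)^N with |D_r| >= omega_N (c r)^N turns this into
  (C / (c s))^(N/p) ||v - v_Omega||_p. Hence the oscillation of v on the boundary is at most
  2 ([v] s^alpha + (C/c)^(N/p) ||v - v_Omega||_p s^(-N/p)) for every s <= 2 r_i / d, and also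
  at most 2^alpha [v]; optimising in s gives the constant. The isodiametric inequality follows
  from the Brunn--Minkowski inequality |(A + B)/2| >= min(|A|, |B|) for finite unions of boxes
  (Hadwiger--Ohmann), applied to A and -A.
\<close>

section \<open>Brunn--Minkowski inequality for finite unions of boxes\<close>

lemma inner_sum_scaleR_Basis: "j \<in> Basis \<Longrightarrow> (\<Sum>i\<in>Basis. f i *\<^sub>R i) \<bullet> j = f j"
  by (simp add: inner_sum_left inner_Basis if_distrib cong: if_cong)

definition midpoints :: "'a::real_vector set \<Rightarrow> 'a set \<Rightarrow> 'a set" where
  "midpoints S T = (\<lambda>(x, y). midpoint x y) ` (S \<times> T)"

lemma midpoints_iff: "z \<in> midpoints S T \<longleftrightarrow> (\<exists>x\<in>S. \<exists>y\<in>T. z = midpoint x y)"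
  unfolding midpoints_def by force

lemma midpoints_commute: "midpoints S T = midpoints T S"
  unfolding set_eq_iff midpoints_iff by (metis midpoint_sym)

lemma midpoints_mono: "S \<subseteq> S' \<Longrightarrow> T \<subseteq> T' \<Longrightarrow> midpoints S T \<subseteq> midpoints S' T'"
  unfolding midpoints_def by auto

lemma compact_midpoints:
  fixes S T :: "'a::euclidean_space set"
  assumes "compact S" "compact T"
  shows "compact (midpoints S T)"
  unfolding midpoints_def midpoint_def case_prod_unfold
  by (intro compact_continuous_image compact_Times assms continuous_intros)

definition nonoverlapping_boxes :: "'a::euclidean_space set set \<Rightarrow> bool" where
  "nonoverlapping_boxes F \<longleftrightarrow> finite F \<and> (\<forall>X\<in>F. \<exists>a b. X = cbox a b \<and> box a b \<noteq> {}) \<and>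
     pairwise (\<lambda>X Y. interior X \<inter> interior Y = {}) F"

lemma lmeasurable_Union_nonoverlapping_boxes:
  "nonoverlapping_boxes F \<Longrightarrow> \<Union>F \<in> lmeasurable"
  unfolding nonoverlapping_boxes_def by (intro lmeasurable_compact compact_Union) auto

lemma disjoint_boxes_separated:
  fixes a b a' b' :: "'a::euclidean_space"
  assumes "box a b \<noteq> {}" "box a' b' \<noteq> {}" "box a b \<inter> box a' b' = {}"
  obtains k where "k \<in> Basis" "b \<bullet> k \<le> a' \<bullet> k \<or> b' \<bullet> k \<le> a \<bullet> k"
proof -
  have "\<exists>k\<in>Basis. b \<bullet> k \<le> a' \<bullet> k \<or> b' \<bullet> k \<le> a \<bullet> k"
  proof (rule ccontr)
    assume "\<not> ?thesis"
    then have overlap: "a' \<bullet> k < b \<bullet> k" "a \<bullet> k < b' \<bullet> k" if "k \<in> Basis" for k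
      using that by auto
    define z where "z = (\<Sum>k\<in>Basis. ((max (a \<bullet> k) (a' \<bullet> k) + min (b \<bullet> k) (b' \<bullet> k)) / 2) *\<^sub>R k)"
    have "z \<in> box a b \<inter> box a' b'"
      using assms(1,2) overlap
      by (auto simp: mem_box box_ne_empty z_def inner_sum_left inner_Basis if_distrib max_def min_def
          cong: if_cong)
    with assms(3) show False by auto
  qed
  with that show ?thesis by blast
qed

lemma nonoverlapping_boxes_two_separated:
  assumes F: "nonoverlapping_boxes F" and XY: "X \<in> F" "Y \<in> F" "X \<noteq> Y"
  obtains a b a' b' k where "cbox a b \<in> F" "cbox a' b' \<in> F" "k \<in> Basis" "b \<bullet> k \<le> a' \<bullet> k"
proof -
  obtain a b where X: "X = cbox a b" "box a b \<noteq> {}"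
    using F XY(1) unfolding nonoverlapping_boxes_def by blast
  obtain a' b' where Y: "Y = cbox a' b'" "box a' b' \<noteq> {}"
    using F XY(2) unfolding nonoverlapping_boxes_def by blast
  have "interior X \<inter> interior Y = {}"
    using F XY unfolding nonoverlapping_boxes_def pairwise_def by blast
  then obtain k where "k \<in> Basis" "b \<bullet> k \<le> a' \<bullet> k \<or> b' \<bullet> k \<le> a \<bullet> k"
    using disjoint_boxes_separated[of a b a' b'] X Y by auto
  then show thesis
    using that XY X Y by blast
qed

lemma interior_cbox_Int_halfspace_empty:
  fixes a b :: "'a::euclidean_space"
  assumes k: "k \<in> Basis"
  shows "b \<bullet> k \<le> c \<Longrightarrow> interior (cbox a b \<inter> {x. c \<le> x \<bullet> k}) = {}"
    and "c \<le> a \<bullet> k \<Longrightarrow> interior (cbox a b \<inter> {x. x \<bullet> k \<le> c}) = {}"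
proof -
  have hyperplane: "interior {x. x \<bullet> k = c} = {}"
    using interior_hyperplane[of k c] k nonzero_Basis by (metis (no_types, lifting) Collect_cong inner_commute)
  show "interior (cbox a b \<inter> {x. c \<le> x \<bullet> k}) = {}" if "b \<bullet> k \<le> c"
  proof -
    have "cbox a b \<inter> {x. c \<le> x \<bullet> k} \<subseteq> {x. x \<bullet> k = c}"
      using k that by (fastforce simp: mem_box)
    then show ?thesis
      using hyperplane interior_mono by blast
  qed
  show "interior (cbox a b \<inter> {x. x \<bullet> k \<le> c}) = {}" if "c \<le> a \<bullet> k"
  proof -
    have "cbox a b \<inter> {x. x \<bullet> k \<le> c} \<subseteq> {x. x \<bullet> k = c}"
      using k that by (fastforce simp: mem_box)
    then show ?thesis
      using hyperplane interior_mono by blast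
  qed
qed

lemma cbox_Int_halfspace:
  fixes a b :: "'a::euclidean_space"
  assumes "k \<in> Basis"
  shows "\<exists>a' b'. cbox a b \<inter> {x. x \<bullet> k \<le> c} = cbox a' b'" "\<exists>a' b'. cbox a b \<inter> {x. c \<le> x \<bullet> k} = cbox a' b'"
  using interval_split[OF assms] by blast+

definition cut_boxes :: "'a::euclidean_space set set \<Rightarrow> 'a set \<Rightarrow> 'a set set" where
  "cut_boxes F H = (\<lambda>X. X \<inter> H) ` {X\<in>F. interior (X \<inter> H) \<noteq> {}}"

lemma Union_cut_boxes_subset: "\<Union>(cut_boxes F H) \<subseteq> \<Union>F \<inter> H"
  unfolding cut_boxes_def by auto

lemma card_cut_boxes_le:
  assumes "finite F"
  shows "card (cut_boxes F H) \<le> card F"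
proof -
  have "card (cut_boxes F H) \<le> card {X\<in>F. interior (X \<inter> H) \<noteq> {}}"
    unfolding cut_boxes_def using assms by (intro card_image_le) auto
  also have "\<dots> \<le> card F"
    using assms by (intro card_mono) auto
  finally show ?thesis .
qed

lemma card_cut_boxes_less:
  assumes "finite F" "X \<in> F" "interior (X \<inter> H) = {}"
  shows "card (cut_boxes F H) < card F"
proof -
  have "card (cut_boxes F H) \<le> card {X\<in>F. interior (X \<inter> H) \<noteq> {}}"
    unfolding cut_boxes_def using assms(1) by (intro card_image_le) auto
  also have "\<dots> < card F"
    using assms by (intro psubset_card_mono) auto
  finally show ?thesis .
qed

lemma nonoverlapping_boxes_cut:
  assumes F: "nonoverlapping_boxes F" and H: "\<And>a b. \<exists>a' b'. cbox a b \<inter> H = cbox a' b'"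
  shows "nonoverlapping_boxes (cut_boxes F H)"
  unfolding nonoverlapping_boxes_def
proof (intro conjI ballI)
  show "finite (cut_boxes F H)"
    using F unfolding nonoverlapping_boxes_def cut_boxes_def by simp
next
  fix Y assume "Y \<in> cut_boxes F H"
  then obtain X where "X \<in> F" "Y = X \<inter> H" "interior Y \<noteq> {}"
    unfolding cut_boxes_def by blast
  moreover obtain a b where "X = cbox a b"
    using F \<open>X \<in> F\<close> unfolding nonoverlapping_boxes_def by blast
  ultimately show "\<exists>a b. Y = cbox a b \<and> box a b \<noteq> {}"
    using H by (metis interior_cbox)
next
  show "pairwise (\<lambda>X Y. interior X \<inter> interior Y = {}) (cut_boxes F H)"
  proof (rule pairwiseI)
    fix Y Z assume "Y \<in> cut_boxes F H" "Z \<in> cut_boxes F H" "Y \<noteq> Z"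
    then obtain X X' where "X \<in> F" "X' \<in> F" "X \<noteq> X'" "Y = X \<inter> H" "Z = X' \<inter> H"
      unfolding cut_boxes_def by blast
    moreover have "interior X \<inter> interior X' = {}"
      using F \<open>X \<in> F\<close> \<open>X' \<in> F\<close> \<open>X \<noteq> X'\<close> unfolding nonoverlapping_boxes_def pairwise_def by blast
    ultimately show "interior Y \<inter> interior Z = {}"
      using interior_mono[of "X \<inter> H" X] interior_mono[of "X' \<inter> H" X'] by blast
  qed
qed

lemma measure_Union_cut_boxes:
  assumes F: "nonoverlapping_boxes F" and H: "\<And>a b. \<exists>a' b'. cbox a b \<inter> H = cbox a' b'"
  shows "measure lebesgue (\<Union>(cut_boxes F H)) = measure lebesgue (\<Union>F \<inter> H)"
proof -
  let ?thin = "(\<lambda>X. X \<inter> H) ` {X\<in>F. interior (X \<inter> H) = {}}"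
  have "negligible (\<Union>?thin)"
  proof (rule negligible_Union)
    show "finite ?thin"
      using F unfolding nonoverlapping_boxes_def by simp
  next
    fix T assume "T \<in> ?thin"
    then obtain X where "X \<in> F" "interior (X \<inter> H) = {}" "T = X \<inter> H"
      by blast
    moreover obtain a b where "X = cbox a b"
      using F \<open>X \<in> F\<close> unfolding nonoverlapping_boxes_def by blast
    ultimately obtain a' b' where "T = cbox a' b'" "box a' b' = {}"
      using H by (metis interior_cbox)
    then show "negligible T"
      using negligible_interval(1) by blast
  qed
  moreover have "\<Union>F \<inter> H - \<Union>(cut_boxes F H) \<subseteq> \<Union>?thin"
    unfolding cut_boxes_def by auto
  ultimately have "negligible (\<Union>F \<inter> H - \<Union>(cut_boxes F H))"
    by (rule negligible_subset)
  moreover have "\<Union>(cut_boxes F H) - \<Union>F \<inter> H = {}"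
    using Union_cut_boxes_subset by blast
  ultimately have "negligible (\<Union>(cut_boxes F H) - \<Union>F \<inter> H \<union> (\<Union>F \<inter> H - \<Union>(cut_boxes F H)))"
    by simp
  from measure_negligible_symdiff[OF lmeasurable_Union_nonoverlapping_boxes[OF nonoverlapping_boxes_cut[OF F H]] this]
  show ?thesis
    by simp
qed

lemma lmeasurable_Int_halfspace:
  fixes S :: "'a::euclidean_space set"
  assumes "S \<in> lmeasurable"
  shows "S \<inter> {x. x \<bullet> k \<le> c} \<in> lmeasurable" "S \<inter> {x. c \<le> x \<bullet> k} \<in> lmeasurable"
proof -
  have "{x::'a. x \<bullet> k \<le> c} \<in> sets lebesgue" "{x::'a. c \<le> x \<bullet> k} \<in> sets lebesgue"
    using closed_halfspace_component_le closed_halfspace_component_ge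
    by (metis borel_closed sets_completionI_sets sets_lborel)+
  then show "S \<inter> {x. x \<bullet> k \<le> c} \<in> lmeasurable" "S \<inter> {x. c \<le> x \<bullet> k} \<in> lmeasurable"
    using assms by (simp_all add: fmeasurable_Int_fmeasurable)
qed

lemma measure_split_halfspaces:
  fixes S :: "'a::euclidean_space set"
  assumes S: "S \<in> lmeasurable" and k: "k \<in> Basis"
  shows "measure lebesgue S = measure lebesgue (S \<inter> {x. x \<bullet> k \<le> c}) + measure lebesgue (S \<inter> {x. c \<le> x \<bullet> k})"
proof -
  have "S \<inter> {x. x \<bullet> k \<le> c} \<in> lmeasurable" "S \<inter> {x. c \<le> x \<bullet> k} \<in> lmeasurable"
    using S by (simp_all add: lmeasurable_Int_halfspace)
  moreover have "negligible ((S \<inter> {x. x \<bullet> k \<le> c}) \<inter> (S \<inter> {x. c \<le> x \<bullet> k}))"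
    by (rule negligible_subset[OF negligible_standard_hyperplane[OF k, of c]]) fastforce
  ultimately have "measure lebesgue ((S \<inter> {x. x \<bullet> k \<le> c}) \<union> (S \<inter> {x. c \<le> x \<bullet> k}))
      = measure lebesgue (S \<inter> {x. x \<bullet> k \<le> c}) + measure lebesgue (S \<inter> {x. c \<le> x \<bullet> k})"
    by (simp add: measure_Un3 negligible_imp_measure0)
  moreover have "(S \<inter> {x. x \<bullet> k \<le> c}) \<union> (S \<inter> {x. c \<le> x \<bullet> k}) = S"
    by auto
  ultimately show ?thesis
    by simp
qed

lemma measure_Int_halfspace_fraction:
  fixes S :: "'a::euclidean_space set"
  assumes S: "S \<in> lmeasurable" and k: "k \<in> Basis"
  obtains \<theta> where "0 \<le> \<theta>" "\<theta> \<le> 1" "measure lebesgue (S \<inter> {x. c \<le> x \<bullet> k}) = \<theta> * measure lebesgue S"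
    "measure lebesgue (S \<inter> {x. x \<bullet> k \<le> c}) = (1 - \<theta>) * measure lebesgue S"
proof -
  define \<theta> where "\<theta> = measure lebesgue (S \<inter> {x. c \<le> x \<bullet> k}) / measure lebesgue S"
  have "measure lebesgue (S \<inter> {x. c \<le> x \<bullet> k}) \<le> measure lebesgue S"
    using S lmeasurable_Int_halfspace(2)[OF S] by (intro measure_mono_fmeasurable) auto
  moreover have "0 \<le> measure lebesgue (S \<inter> {x. c \<le> x \<bullet> k})"
    by (rule measure_nonneg)
  ultimately have "0 \<le> \<theta>" "\<theta> \<le> 1" and up: "measure lebesgue (S \<inter> {x. c \<le> x \<bullet> k}) = \<theta> * measure lebesgue S"
    unfolding \<theta>_def by (auto simp: divide_le_eq_1 simp del: measure_nonneg)
  moreover have "measure lebesgue (S \<inter> {x. x \<bullet> k \<le> c}) = (1 - \<theta>) * measure lebesgue S"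
    using measure_split_halfspaces[OF S k, of c] up by (simp add: algebra_simps)
  ultimately show thesis
    using that by blast
qed

lemma measure_Int_halfspace_diff_le:
  fixes S :: "'a::euclidean_space set"
  assumes S: "S \<in> lmeasurable" "S \<subseteq> cbox l u" and k: "k \<in> Basis" and lu: "\<forall>i\<in>Basis. l \<bullet> i \<le> u \<bullet> i"
    and st: "s \<le> t"
  shows "\<bar>measure lebesgue (S \<inter> {x. s \<le> x \<bullet> k}) - measure lebesgue (S \<inter> {x. t \<le> x \<bullet> k})\<bar>
    \<le> (\<Prod>i\<in>Basis-{k}. u \<bullet> i - l \<bullet> i) * (t - s)"
proof -
  let ?S = "\<lambda>t. S \<inter> {x. t \<le> x \<bullet> k}"
  have sub: "?S t \<subseteq> ?S s"
    using st by auto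
  define l' where "l' = (\<Sum>i\<in>Basis. (if i = k then s else l \<bullet> i) *\<^sub>R i)"
  define u' where "u' = (\<Sum>i\<in>Basis. (if i = k then t else u \<bullet> i) *\<^sub>R i)"
  have l'u': "l' \<bullet> i = (if i = k then s else l \<bullet> i)" "u' \<bullet> i = (if i = k then t else u \<bullet> i)"
    if "i \<in> Basis" for i
    using that by (simp_all add: l'_def u'_def inner_sum_scaleR_Basis)
  have "?S s - ?S t \<subseteq> cbox l' u'"
  proof
    fix x assume x: "x \<in> ?S s - ?S t"
    then have "x \<in> cbox l u"
      using S(2) by blast
    with x k show "x \<in> cbox l' u'"
      by (auto simp: mem_box l'u')
  qed
  then have "measure lebesgue (?S s - ?S t) \<le> measure lebesgue (cbox l' u')"
    using lmeasurable_Int_halfspace[OF S(1)] by (intro measure_mono_fmeasurable) (auto intro: fmeasurableD)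
  also have "measure lebesgue (cbox l' u') = (\<Prod>i\<in>Basis. u' \<bullet> i - l' \<bullet> i)"
    using content_cbox[of l' u'] lu st l'u' by simp
  also have "\<dots> = (u' \<bullet> k - l' \<bullet> k) * (\<Prod>i\<in>Basis-{k}. u' \<bullet> i - l' \<bullet> i)"
    using k by (simp add: prod.remove)
  also have "\<dots> = (t - s) * (\<Prod>i\<in>Basis-{k}. u \<bullet> i - l \<bullet> i)"
    using k l'u' by (auto intro!: prod.cong)
  finally show ?thesis
    using sub lmeasurable_Int_halfspace[OF S(1)]
    by (simp add: measurable_measure_Diff measure_mono_fmeasurable fmeasurableD mult.commute)
qed

lemma measure_Int_halfspace_lipschitz:
  fixes S :: "'a::euclidean_space set"
  assumes S: "S \<in> lmeasurable" "S \<subseteq> cbox l u" and k: "k \<in> Basis" and lu: "\<forall>i\<in>Basis. l \<bullet> i \<le> u \<bullet> i"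
  shows "(\<Prod>i\<in>Basis-{k}. u \<bullet> i - l \<bullet> i)-lipschitz_on UNIV (\<lambda>t. measure lebesgue (S \<inter> {x. t \<le> x \<bullet> k}))"
proof (rule lipschitz_onI)
  show "0 \<le> (\<Prod>i\<in>Basis-{k}. u \<bullet> i - l \<bullet> i)"
    using lu by (intro prod_nonneg) auto
  fix s t :: real
  show "dist (measure lebesgue (S \<inter> {x. s \<le> x \<bullet> k})) (measure lebesgue (S \<inter> {x. t \<le> x \<bullet> k}))
      \<le> (\<Prod>i\<in>Basis-{k}. u \<bullet> i - l \<bullet> i) * dist s t"
    using measure_Int_halfspace_diff_le[OF S k lu, of s t] measure_Int_halfspace_diff_le[OF S k lu, of t s]
    by (cases "s \<le> t") (auto simp: dist_real_def abs_minus_commute)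
qed

lemma halfspace_with_measure_fraction:
  fixes S :: "'a::euclidean_space set"
  assumes S: "S \<in> lmeasurable" "bounded S" and k: "k \<in> Basis" and \<theta>: "0 \<le> \<theta>" "\<theta> \<le> 1"
  obtains c where "measure lebesgue (S \<inter> {x. c \<le> x \<bullet> k}) = \<theta> * measure lebesgue S"
    "measure lebesgue (S \<inter> {x. x \<bullet> k \<le> c}) = (1 - \<theta>) * measure lebesgue S"
proof -
  obtain c where up: "measure lebesgue (S \<inter> {x. c \<le> x \<bullet> k}) = \<theta> * measure lebesgue S"
  proof (cases "S = {}")
    case True
    with that show ?thesis by simp
  next
    case False
    obtain a where a: "S \<subseteq> cbox (-a) a"
      using bounded_subset_cbox_symmetric[OF S(2)] by blast
    moreover obtain x0 where "x0 \<in> S"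
      using False by blast
    ultimately have lu: "\<forall>i\<in>Basis. (-a) \<bullet> i \<le> a \<bullet> i"
      unfolding subset_iff mem_box by (meson order_trans)
    let ?f = "\<lambda>t. measure lebesgue (S \<inter> {x. t \<le> x \<bullet> k})"
    have "continuous_on {(-a) \<bullet> k .. a \<bullet> k + 1} ?f"
      using lipschitz_on_continuous_on[OF measure_Int_halfspace_lipschitz[OF S(1) a k lu]]
      by (rule continuous_on_subset) simp
    moreover have "S \<inter> {x. (-a) \<bullet> k \<le> x \<bullet> k} = S" "S \<inter> {x. a \<bullet> k + 1 \<le> x \<bullet> k} = {}"
      using a k by (fastforce simp: mem_box subset_iff)+
    moreover have "(-a) \<bullet> k \<le> a \<bullet> k + 1"
      using lu k by force
    moreover have "0 \<le> \<theta> * measure lebesgue S" "\<theta> * measure lebesgue S \<le> measure lebesgue S"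
      using \<theta> by (simp_all add: mult_left_le_one_le)
    ultimately show ?thesis
      using IVT2'[of ?f "a \<bullet> k + 1" "\<theta> * measure lebesgue S" "(-a) \<bullet> k"] that by auto
  qed
  moreover have "measure lebesgue (S \<inter> {x. x \<bullet> k \<le> c}) = (1 - \<theta>) * measure lebesgue S"
    using measure_split_halfspaces[OF S(1) k, of c] up by (simp add: algebra_simps)
  ultimately show thesis
    using that by blast
qed

lemma cbox_midpoint_subset_midpoints:
  fixes a b a' b' :: "'a::euclidean_space"
  assumes "cbox a b \<noteq> {}" "cbox a' b' \<noteq> {}"
  shows "cbox (midpoint a a') (midpoint b b') \<subseteq> midpoints (cbox a b) (cbox a' b')"
proof
  fix z assume z: "z \<in> cbox (midpoint a a') (midpoint b b')"
  define x where "x = (\<Sum>i\<in>Basis. max (a \<bullet> i) (2 * (z \<bullet> i) - b' \<bullet> i) *\<^sub>R i)"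
  define y where "y = 2 *\<^sub>R z - x"
  have xi: "x \<bullet> i = max (a \<bullet> i) (2 * (z \<bullet> i) - b' \<bullet> i)" if "i \<in> Basis" for i
    using that by (simp add: x_def inner_sum_scaleR_Basis)
  have "a \<bullet> i \<le> x \<bullet> i \<and> x \<bullet> i \<le> b \<bullet> i \<and> a' \<bullet> i \<le> y \<bullet> i \<and> y \<bullet> i \<le> b' \<bullet> i"
    if i: "i \<in> Basis" for i
  proof -
    have "a \<bullet> i \<le> b \<bullet> i" "a' \<bullet> i \<le> b' \<bullet> i"
      using assms i by (auto simp: box_ne_empty)
    moreover have "a \<bullet> i + a' \<bullet> i \<le> 2 * (z \<bullet> i)" "2 * (z \<bullet> i) \<le> b \<bullet> i + b' \<bullet> i"
      using z i by (auto simp: mem_box midpoint_def inner_add_left)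
    ultimately show ?thesis
      using i by (simp add: xi y_def inner_diff_left max_def)
  qed
  then have "x \<in> cbox a b" "y \<in> cbox a' b'"
    by (simp_all add: mem_box)
  moreover have "z = midpoint x y"
    by (simp add: y_def midpoint_def)
  ultimately show "z \<in> midpoints (cbox a b) (cbox a' b')"
    unfolding midpoints_iff by blast
qed

lemma min_prod_le_prod_average:
  fixes s s' :: "'i \<Rightarrow> real"
  assumes "\<And>i. i \<in> I \<Longrightarrow> 0 \<le> s i" "\<And>i. i \<in> I \<Longrightarrow> 0 \<le> s' i"
  shows "min (\<Prod>i\<in>I. s i) (\<Prod>i\<in>I. s' i) \<le> (\<Prod>i\<in>I. (s i + s' i) / 2)"
proof (rule power2_le_imp_le)
  let ?X = "\<Prod>i\<in>I. s i" and ?Y = "\<Prod>i\<in>I. s' i"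
  have "0 \<le> ?X" "0 \<le> ?Y"
    using assms by (simp_all add: prod_nonneg)
  then have "(min ?X ?Y)\<^sup>2 \<le> ?X * ?Y"
    by (cases "?X \<le> ?Y") (simp_all add: power2_eq_square min_def mult_left_mono mult_right_mono)
  also have "\<dots> = (\<Prod>i\<in>I. s i * s' i)"
    by (rule prod.distrib[symmetric])
  also have "\<dots> \<le> (\<Prod>i\<in>I. ((s i + s' i) / 2)\<^sup>2)"
  proof (rule prod_mono)
    fix i assume "i \<in> I"
    have "0 \<le> (s i - s' i)\<^sup>2"
      by (rule zero_le_power2)
    then show "0 \<le> s i * s' i \<and> s i * s' i \<le> ((s i + s' i) / 2)\<^sup>2"
      using assms \<open>i \<in> I\<close> by (simp add: power2_eq_square algebra_simps)
  qed
  also have "\<dots> = (\<Prod>i\<in>I. (s i + s' i) / 2)\<^sup>2"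
    by (rule prod_power_distrib[symmetric])
  finally show "(min ?X ?Y)\<^sup>2 \<le> (\<Prod>i\<in>I. (s i + s' i) / 2)\<^sup>2" .
  show "0 \<le> (\<Prod>i\<in>I. (s i + s' i) / 2)"
    using assms by (simp add: prod_nonneg)
qed

lemma Brunn_Minkowski_cbox:
  fixes a b a' b' :: "'a::euclidean_space"
  shows "min (measure lebesgue (cbox a b)) (measure lebesgue (cbox a' b'))
    \<le> measure lebesgue (midpoints (cbox a b) (cbox a' b'))"
proof (cases "cbox a b = {} \<or> cbox a' b' = {}")
  case True
  then show ?thesis
    by (auto simp: min_le_iff_disj)
next
  case False
  then have sides: "0 \<le> b \<bullet> i - a \<bullet> i" "0 \<le> b' \<bullet> i - a' \<bullet> i" if "i \<in> Basis" for i
    using that by (auto simp: box_ne_empty)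
  have "measure lborel (cbox a b) = (\<Prod>i\<in>Basis. b \<bullet> i - a \<bullet> i)"
    "measure lborel (cbox a' b') = (\<Prod>i\<in>Basis. b' \<bullet> i - a' \<bullet> i)"
    using False by (intro content_cbox'; blast)+
  then have "min (measure lebesgue (cbox a b)) (measure lebesgue (cbox a' b'))
      \<le> (\<Prod>i\<in>Basis. ((b \<bullet> i - a \<bullet> i) + (b' \<bullet> i - a' \<bullet> i)) / 2)"
    using min_prod_le_prod_average[of Basis, OF sides] by simp
  also have "\<dots> = (\<Prod>i\<in>Basis. midpoint b b' \<bullet> i - midpoint a a' \<bullet> i)"
    by (rule prod.cong) (simp_all add: midpoint_def inner_add_left field_simps)
  also have "\<dots> = measure lborel (cbox (midpoint a a') (midpoint b b'))"
  proof (rule content_cbox[symmetric], rule ballI)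
    fix i :: 'a assume "i \<in> Basis"
    then show "midpoint a a' \<bullet> i \<le> midpoint b b' \<bullet> i"
      using sides[of i] by (simp add: midpoint_def inner_add_left)
  qed
  also have "\<dots> = measure lebesgue (cbox (midpoint a a') (midpoint b b'))"
    by simp
  also have "\<dots> \<le> measure lebesgue (midpoints (cbox a b) (cbox a' b'))"
  proof (rule measure_mono_fmeasurable)
    show "cbox (midpoint a a') (midpoint b b') \<subseteq> midpoints (cbox a b) (cbox a' b')"
      using False by (intro cbox_midpoint_subset_midpoints) auto
    show "midpoints (cbox a b) (cbox a' b') \<in> lmeasurable"
      by (intro lmeasurable_compact compact_midpoints compact_cbox)
  qed simp
  finally show ?thesis .
qed

lemma midpoints_Int_halfspaces:
  fixes S T :: "'a::euclidean_space set"
  shows "midpoints (S \<inter> {x. c \<le> x \<bullet> k}) (T \<inter> {x. c' \<le> x \<bullet> k}) \<subseteq> midpoints S T \<inter> {x. (c + c') / 2 \<le> x \<bullet> k}"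
    and "midpoints (S \<inter> {x. x \<bullet> k \<le> c}) (T \<inter> {x. x \<bullet> k \<le> c'}) \<subseteq> midpoints S T \<inter> {x. x \<bullet> k \<le> (c + c') / 2}"
  by (fastforce simp: midpoints_iff midpoint_def inner_add_left)+

lemma min_split_fraction:
  fixes a b \<theta> :: real
  assumes "0 \<le> \<theta>" "\<theta> \<le> 1"
  shows "min (\<theta> * a) (\<theta> * b) + min ((1 - \<theta>) * a) ((1 - \<theta>) * b) = min a b"
  using assms min_mult_distrib_left[of \<theta> a b] min_mult_distrib_left[of "1 - \<theta>" a b]
  by (simp add: algebra_simps)

lemma Brunn_Minkowski_boxes_cut:
  fixes F G :: "'a::euclidean_space set set"
  assumes IH: "\<And>F' G' :: 'a set set. nonoverlapping_boxes F' \<Longrightarrow> nonoverlapping_boxes G' \<Longrightarrow>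
      card F' + card G' < card F + card G \<Longrightarrow>
      min (measure lebesgue (\<Union>F')) (measure lebesgue (\<Union>G')) \<le> measure lebesgue (midpoints (\<Union>F') (\<Union>G'))"
    and F: "nonoverlapping_boxes F" and G: "nonoverlapping_boxes G"
    and X: "X \<in> F" "interior (X \<inter> H) = {}"
    and H: "\<And>a b. \<exists>a' b'. cbox a b \<inter> H = cbox a' b'" and H': "\<And>a b. \<exists>a' b'. cbox a b \<inter> H' = cbox a' b'"
    and K: "midpoints (\<Union>F \<inter> H) (\<Union>G \<inter> H') \<subseteq> K" "K \<in> lmeasurable"
  shows "min (measure lebesgue (\<Union>F \<inter> H)) (measure lebesgue (\<Union>G \<inter> H')) \<le> measure lebesgue K"
proof -
  let ?F = "cut_boxes F H" and ?G = "cut_boxes G H'"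
  have F': "nonoverlapping_boxes ?F" and G': "nonoverlapping_boxes ?G"
    using nonoverlapping_boxes_cut[OF F H] nonoverlapping_boxes_cut[OF G H'] .
  have "card ?F < card F" "card ?G \<le> card G"
    using F G X unfolding nonoverlapping_boxes_def by (simp_all add: card_cut_boxes_less card_cut_boxes_le)
  then have "card ?F + card ?G < card F + card G"
    by linarith
  then have "min (measure lebesgue (\<Union>?F)) (measure lebesgue (\<Union>?G)) \<le> measure lebesgue (midpoints (\<Union>?F) (\<Union>?G))"
    using F' G' IH by blast
  also have "\<dots> \<le> measure lebesgue K"
  proof (rule measure_mono_fmeasurable)
    show "midpoints (\<Union>?F) (\<Union>?G) \<subseteq> K"
      using midpoints_mono[OF Union_cut_boxes_subset Union_cut_boxes_subset] K(1) by blast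
    show "midpoints (\<Union>?F) (\<Union>?G) \<in> sets lebesgue"
      using F' G' unfolding nonoverlapping_boxes_def
      by (intro fmeasurableD lmeasurable_compact compact_midpoints compact_Union) auto
  qed (rule K(2))
  finally show ?thesis
    using measure_Union_cut_boxes[OF F H] measure_Union_cut_boxes[OF G H'] by simp
qed

text \<open>The Hadwiger--Ohmann step: a hyperplane separating two boxes of F cuts F into two families
  with fewer boxes; G is cut by a parallel hyperplane in the same volume ratio, and the midpoint
  sets of corresponding halves lie on opposite sides of the middle hyperplane.\<close>

lemma Brunn_Minkowski_boxes_step:
  fixes F G :: "'a::euclidean_space set set"
  assumes IH: "\<And>F' G' :: 'a set set. nonoverlapping_boxes F' \<Longrightarrow> nonoverlapping_boxes G' \<Longrightarrow>
      card F' + card G' < card F + card G \<Longrightarrow>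
      min (measure lebesgue (\<Union>F')) (measure lebesgue (\<Union>G')) \<le> measure lebesgue (midpoints (\<Union>F') (\<Union>G'))"
    and F: "nonoverlapping_boxes F" and G: "nonoverlapping_boxes G"
    and XY: "X \<in> F" "Y \<in> F" "X \<noteq> Y"
  shows "min (measure lebesgue (\<Union>F)) (measure lebesgue (\<Union>G)) \<le> measure lebesgue (midpoints (\<Union>F) (\<Union>G))"
proof -
  obtain a b a' b' k where boxes: "cbox a b \<in> F" "cbox a' b' \<in> F" and k: "k \<in> Basis" and sep: "b \<bullet> k \<le> a' \<bullet> k"
    using nonoverlapping_boxes_two_separated[OF F XY] .
  let ?A = "\<Union>F" and ?B = "\<Union>G" and ?M = "midpoints (\<Union>F) (\<Union>G)"
  have A: "?A \<in> lmeasurable" and B: "?B \<in> lmeasurable" "bounded ?B" and M: "?M \<in> lmeasurable"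
    using F G unfolding nonoverlapping_boxes_def
    by (auto intro!: lmeasurable_compact compact_imp_bounded compact_midpoints compact_Union)
  obtain \<theta> where \<theta>: "0 \<le> \<theta>" "\<theta> \<le> 1"
    and A_up: "measure lebesgue (?A \<inter> {x. b \<bullet> k \<le> x \<bullet> k}) = \<theta> * measure lebesgue ?A"
    and A_lo: "measure lebesgue (?A \<inter> {x. x \<bullet> k \<le> b \<bullet> k}) = (1 - \<theta>) * measure lebesgue ?A"
    using measure_Int_halfspace_fraction[OF A k] .
  obtain c where B_up: "measure lebesgue (?B \<inter> {x. c \<le> x \<bullet> k}) = \<theta> * measure lebesgue ?B"
    and B_lo: "measure lebesgue (?B \<inter> {x. x \<bullet> k \<le> c}) = (1 - \<theta>) * measure lebesgue ?B"
    using halfspace_with_measure_fraction[OF B k \<theta>] .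
  let ?h = "(b \<bullet> k + c) / 2"
  have "min (measure lebesgue (?A \<inter> {x. b \<bullet> k \<le> x \<bullet> k})) (measure lebesgue (?B \<inter> {x. c \<le> x \<bullet> k}))
      \<le> measure lebesgue (?M \<inter> {x. ?h \<le> x \<bullet> k})"
    by (rule Brunn_Minkowski_boxes_cut[OF IH F G boxes(1) interior_cbox_Int_halfspace_empty(1)[OF k order_refl]
          cbox_Int_halfspace(2)[OF k] cbox_Int_halfspace(2)[OF k] midpoints_Int_halfspaces(1)
          lmeasurable_Int_halfspace(2)[OF M]])
  moreover have "min (measure lebesgue (?A \<inter> {x. x \<bullet> k \<le> b \<bullet> k})) (measure lebesgue (?B \<inter> {x. x \<bullet> k \<le> c}))
      \<le> measure lebesgue (?M \<inter> {x. x \<bullet> k \<le> ?h})"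
    by (rule Brunn_Minkowski_boxes_cut[OF IH F G boxes(2) interior_cbox_Int_halfspace_empty(2)[OF k sep]
          cbox_Int_halfspace(1)[OF k] cbox_Int_halfspace(1)[OF k] midpoints_Int_halfspaces(2)
          lmeasurable_Int_halfspace(1)[OF M]])
  ultimately show ?thesis
    using min_split_fraction[OF \<theta>, of "measure lebesgue ?A" "measure lebesgue ?B"]
      measure_split_halfspaces[OF M k, of ?h] A_up A_lo B_up B_lo
    by linarith
qed

theorem Brunn_Minkowski_nonoverlapping_boxes:
  fixes F G :: "'a::euclidean_space set set"
  assumes "nonoverlapping_boxes F" "nonoverlapping_boxes G"
  shows "min (measure lebesgue (\<Union>F)) (measure lebesgue (\<Union>G)) \<le> measure lebesgue (midpoints (\<Union>F) (\<Union>G))"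
  using assms
proof (induction "card F + card G" arbitrary: F G rule: less_induct)
  case less
  have IH: "min (measure lebesgue (\<Union>F')) (measure lebesgue (\<Union>G')) \<le> measure lebesgue (midpoints (\<Union>F') (\<Union>G'))"
    if "nonoverlapping_boxes F'" "nonoverlapping_boxes G'" "card F' + card G' < card F + card G"
    for F' G' :: "'a set set"
    using less.hyps[OF that(3) that(1,2)] .
  show ?case
  proof (cases "\<exists>X\<in>F. \<exists>Y\<in>F. X \<noteq> Y")
    case True
    then show ?thesis
      using Brunn_Minkowski_boxes_step[OF IH less.prems] by blast
  next
    case F_single: False
    show ?thesis
    proof (cases "\<exists>X\<in>G. \<exists>Y\<in>G. X \<noteq> Y")
      case True
      then have "min (measure lebesgue (\<Union>G)) (measure lebesgue (\<Union>F)) \<le> measure lebesgue (midpoints (\<Union>G) (\<Union>F))"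
        using Brunn_Minkowski_boxes_step[OF IH[unfolded add.commute[of "card F"]] less.prems(2,1)] by blast
      then show ?thesis
        by (simp only: min.commute[of "measure lebesgue (\<Union>G)"] midpoints_commute[of "\<Union>G"])
    next
      case G_single: False
      show ?thesis
      proof (cases "F = {} \<or> G = {}")
        case True
        then show ?thesis
          by (auto simp: min_le_iff_disj)
      next
        case False
        then obtain X Y where "X \<in> F" "Y \<in> G"
          by blast
        then have "F = {X}" "G = {Y}"
          using F_single G_single by auto
        moreover obtain a b a' b' where "X = cbox a b" "Y = cbox a' b'"
          using less.prems \<open>X \<in> F\<close> \<open>Y \<in> G\<close> unfolding nonoverlapping_boxes_def by meson
        ultimately show ?thesis
          using Brunn_Minkowski_cbox[of a b a' b'] by simp
      qed
    qed
  qed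
qed

section \<open>The isodiametric inequality\<close>

lemma division_of_nonoverlapping_boxes:
  assumes p: "p division_of S"
  defines "F \<equiv> {K\<in>p. interior K \<noteq> {}}"
  shows "nonoverlapping_boxes F" "\<Union>F \<subseteq> S" "measure lebesgue (\<Union>F) = measure lebesgue S"
proof -
  show F: "nonoverlapping_boxes F"
    using division_ofD[OF p] unfolding nonoverlapping_boxes_def F_def pairwise_def
    by (metis (mono_tags, lifting) finite_subset interior_cbox mem_Collect_eq subsetI)
  show "\<Union>F \<subseteq> S"
    using division_ofD(6)[OF p] unfolding F_def by blast
  have "negligible (\<Union>{K\<in>p. interior K = {}})"
  proof (rule negligible_Union)
    show "finite {K\<in>p. interior K = {}}"
      using division_ofD(1)[OF p] by simp
  next
    fix K assume K: "K \<in> {K\<in>p. interior K = {}}"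
    then obtain a b where "K = cbox a b"
      using division_ofD(4)[OF p] by blast
    with K show "negligible K"
      using negligible_interval(1)[of a b] by simp
  qed
  moreover have "\<Union>F - S \<union> (S - \<Union>F) \<subseteq> \<Union>{K\<in>p. interior K = {}}"
    using division_ofD(6)[OF p] unfolding F_def by blast
  ultimately have "negligible (\<Union>F - S \<union> (S - \<Union>F))"
    by (rule negligible_subset)
  from measure_negligible_symdiff[OF lmeasurable_Union_nonoverlapping_boxes[OF F] this]
  show "measure lebesgue (\<Union>F) = measure lebesgue S"
    by (rule sym)
qed

lemma nonoverlapping_boxes_inner_approximation:
  fixes S :: "'a::euclidean_space set"
  assumes S: "open S" "bounded S" and e: "0 < e"
  obtains F where "nonoverlapping_boxes F" "\<Union>F \<subseteq> S" "measure lebesgue S - e < measure lebesgue (\<Union>F)"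
proof -
  obtain \<D> where D: "countable \<D>" "\<D> \<subseteq> Pow S" "\<And>X. X \<in> \<D> \<Longrightarrow> \<exists>a b. X = cbox a b" "\<Union>\<D> = S"
    using open_countable_Union_open_cbox[OF S(1)] by metis
  have Dm: "X \<in> lmeasurable" if "X \<in> \<D>" for X
    using D(3)[OF that] by auto
  have "measure lebesgue (\<Union>D') \<le> measure lebesgue S" if "D' \<subseteq> \<D>" "finite D'" for D'
  proof (rule measure_mono_fmeasurable)
    show "\<Union>D' \<subseteq> S"
      using that D(2) by blast
    show "\<Union>D' \<in> sets lebesgue"
      using that Dm by (intro sets.finite_Union) (auto intro: fmeasurableD)
  qed (rule lmeasurable_open[OF S(2,1)])
  then obtain D' where D': "D' \<subseteq> \<D>" "finite D'" "measure lebesgue S - e < measure lebesgue (\<Union>D')"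
    using measure_countable_Union_approachable[OF D(1) e Dm] D(4) by blast
  obtain p where p: "p division_of \<Union>D'"
    using elementary_unions_intervals[OF D'(2)] D'(1) D(3) by blast
  let ?F = "{K\<in>p. interior K \<noteq> {}}"
  show thesis
  proof (rule that)
    show "nonoverlapping_boxes ?F"
      by (rule division_of_nonoverlapping_boxes(1)[OF p])
    show "\<Union>?F \<subseteq> S"
      using division_of_nonoverlapping_boxes(2)[OF p] D'(1) D(2) by blast
    show "measure lebesgue S - e < measure lebesgue (\<Union>?F)"
      using division_of_nonoverlapping_boxes(3)[OF p] D'(3) by simp
  qed
qed

lemma nonoverlapping_boxes_uminus:
  fixes F :: "'a::euclidean_space set set"
  assumes F: "nonoverlapping_boxes F"
  shows "nonoverlapping_boxes ((\<lambda>X. uminus ` X) ` F)"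
  unfolding nonoverlapping_boxes_def
proof (intro conjI ballI)
  show "finite ((\<lambda>X. uminus ` X) ` F)"
    using F unfolding nonoverlapping_boxes_def by simp
next
  fix Y assume "Y \<in> (\<lambda>X. uminus ` X) ` F"
  then obtain X where "X \<in> F" "Y = uminus ` X"
    by blast
  moreover obtain a b where "X = cbox a b" "box a b \<noteq> {}"
    using F \<open>X \<in> F\<close> unfolding nonoverlapping_boxes_def by blast
  ultimately have "Y = cbox (-b) (-a)" "box (-b) (-a) \<noteq> {}"
    by (simp_all add: box_ne_empty inner_minus_left)
  then show "\<exists>a b. Y = cbox a b \<and> box a b \<noteq> {}"
    by blast
next
  show "pairwise (\<lambda>X Y. interior X \<inter> interior Y = {}) ((\<lambda>X. uminus ` X) ` F)"
  proof (rule pairwiseI)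
    fix Y Z assume "Y \<in> (\<lambda>X. uminus ` X) ` F" "Z \<in> (\<lambda>X. uminus ` X) ` F" "Y \<noteq> Z"
    then obtain X X' where "X \<in> F" "X' \<in> F" "X \<noteq> X'" "Y = uminus ` X" "Z = uminus ` X'"
      by blast
    moreover have "interior X \<inter> interior X' = {}"
      using F \<open>X \<in> F\<close> \<open>X' \<in> F\<close> \<open>X \<noteq> X'\<close> unfolding nonoverlapping_boxes_def pairwise_def by blast
    ultimately show "interior Y \<inter> interior Z = {}"
      by (auto simp: interior_negations)
  qed
qed

text \<open>Brunn--Minkowski applied to a union of boxes A and its reflection -A: the midpoint set
  of A and -A consists of vectors (x - y)/2 with x, y in A, so it lies in a ball of radius d/2.\<close>

lemma measure_nonoverlapping_boxes_le_ball:
  fixes F :: "'a::euclidean_space set set"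
  assumes F: "nonoverlapping_boxes F" and S: "bounded S" "\<Union>F \<subseteq> S"
  shows "measure lebesgue (\<Union>F) \<le> unit_ball_vol DIM('a) * (diameter S / 2) ^ DIM('a)"
proof -
  let ?G = "(\<lambda>X. uminus ` X) ` F"
  have G: "nonoverlapping_boxes ?G"
    using F by (rule nonoverlapping_boxes_uminus)
  have UG: "\<Union>?G = uminus ` \<Union>F"
    by blast
  have "measure lebesgue (\<Union>?G) = measure lebesgue (\<Union>F)"
    unfolding UG using measure_lebesgue_affine[of "-1" 0 "\<Union>F"] by simp
  then have "measure lebesgue (\<Union>F) = min (measure lebesgue (\<Union>F)) (measure lebesgue (\<Union>?G))"
    by simp
  also have "\<dots> \<le> measure lebesgue (midpoints (\<Union>F) (\<Union>?G))"
    using F G by (rule Brunn_Minkowski_nonoverlapping_boxes)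
  also have "\<dots> \<le> measure lebesgue (cball (0::'a) (diameter S / 2))"
  proof (rule measure_mono_fmeasurable)
    show "midpoints (\<Union>F) (\<Union>?G) \<subseteq> cball 0 (diameter S / 2)"
    proof
      fix z assume "z \<in> midpoints (\<Union>F) (\<Union>?G)"
      then obtain x y where xy: "x \<in> \<Union>F" "y \<in> \<Union>F" "z = midpoint x (- y)"
        unfolding midpoints_iff UG by blast
      then have "norm z = dist x y / 2"
        by (simp add: midpoint_def dist_norm)
      moreover have "dist x y \<le> diameter S"
        using diameter_bounded_bound[OF S(1)] xy S(2) by blast
      ultimately show "z \<in> cball 0 (diameter S / 2)"
        by simp
    qed
    show "midpoints (\<Union>F) (\<Union>?G) \<in> sets lebesgue"
      using F G unfolding nonoverlapping_boxes_def
      by (intro fmeasurableD lmeasurable_compact compact_midpoints compact_Union) auto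
  qed simp
  also have "\<dots> = unit_ball_vol DIM('a) * (diameter S / 2) ^ DIM('a)"
    using content_cball[of "diameter S / 2" 0] diameter_ge_0[OF S(1)] by simp
  finally show ?thesis .
qed

theorem isodiametric_inequality:
  fixes S :: "'a::euclidean_space set"
  assumes "open S" "bounded S"
  shows "measure lebesgue S \<le> unit_ball_vol DIM('a) * (diameter S / 2) ^ DIM('a)"
proof (rule field_le_epsilon)
  fix e :: real assume "0 < e"
  then obtain F where "nonoverlapping_boxes F" "\<Union>F \<subseteq> S" "measure lebesgue S - e < measure lebesgue (\<Union>F)"
    using nonoverlapping_boxes_inner_approximation assms by blast
  then show "measure lebesgue S \<le> unit_ball_vol DIM('a) * (diameter S / 2) ^ DIM('a) + e"
    using measure_nonoverlapping_boxes_le_ball[of F S] assms by simp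
qed

section \<open>An L1--Lp estimate\<close>

text \<open>The tangent line of the convex function u powr p at K, solved for u.\<close>

lemma le_powr_tangent:
  fixes p u K :: real
  assumes p: "1 \<le> p" and u: "0 \<le> u" and K: "0 < K"
  shows "u \<le> u powr p / (p * K powr (p - 1)) + (1 - 1 / p) * K"
proof (cases "p = 1 \<or> u = 0")
  case True
  with p K show ?thesis
    by (auto simp: divide_le_eq)
next
  case False
  with p u have p1: "1 < p" and u0: "0 < u"
    by auto
  have "u / K = ((u / K) powr p) powr (1 / p) * 1 powr (1 - 1 / p)"
    using u0 K p1 by (simp add: powr_powr)
  also have "\<dots> \<le> (1 / p) * (u / K) powr p + (1 - 1 / p) * 1"
    using p1 u0 K by (intro Youngs_inequality_0) auto
  finally have "u \<le> K * ((1 / p) * (u / K) powr p + (1 - 1 / p))"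
    using K by (simp add: pos_divide_le_eq mult.commute)
  moreover have "K * ((1 / p) * (u / K) powr p) = u powr p / (p * K powr (p - 1))"
    using K u0 p1 by (simp add: powr_divide powr_diff field_simps)
  ultimately show ?thesis
    by (simp add: distrib_left mult.commute)
qed

lemma set_integrable_real_const:
  assumes "D \<in> sets M" "emeasure M D < \<infinity>"
  shows "set_integrable M D (\<lambda>_. c :: real)"
  using integrable_real_indicator[OF assms] unfolding set_integrable_def
  by (simp add: integrable_mult_left mult.commute)

lemma set_integral_abs_le_tangent:
  fixes w :: "'a \<Rightarrow> real"
  assumes p: "1 \<le> p" and D: "D \<in> sets M" "emeasure M D < \<infinity>" and K: "0 < K"
    and w: "set_integrable M D w" "set_integrable M D (\<lambda>x. \<bar>w x\<bar> powr p)"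
  shows "(LINT x:D|M. \<bar>w x\<bar>)
    \<le> (LINT x:D|M. \<bar>w x\<bar> powr p) / (p * K powr (p - 1)) + (1 - 1 / p) * K * measure M D"
proof -
  note const = set_integrable_real_const[OF D]
  have "(LINT x:D|M. \<bar>w x\<bar>) \<le> (LINT x:D|M. \<bar>w x\<bar> powr p / (p * K powr (p - 1)) + (1 - 1 / p) * K)"
    using w const le_powr_tangent[OF p _ K]
    by (intro set_integral_mono set_integrable_abs set_integral_add) (auto simp: set_integrable_divide)
  also have "\<dots> = (LINT x:D|M. \<bar>w x\<bar> powr p) / (p * K powr (p - 1)) + (LINT x:D|M. (1 - 1 / p) * K)"
    using w const by (subst set_integral_add(2)) (auto simp: set_integral_divide_zero)
  also have "(LINT x:D|M. (1 - 1 / p) * K) = (1 - 1 / p) * K * measure M D"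
    using set_integral_const[OF D(1) less_imp_neq[OF D(2)], of "(1 - 1 / p) * K"] by (simp add: mult.commute)
  finally show ?thesis .
qed

lemma set_integral_abs_le_Lp:
  fixes w :: "'a \<Rightarrow> real"
  assumes p: "1 \<le> p" and D: "D \<in> sets M" "emeasure M D < \<infinity>" "0 < measure M D"
    and w: "set_integrable M D w" "set_integrable M D (\<lambda>x. \<bar>w x\<bar> powr p)"
  shows "(LINT x:D|M. \<bar>w x\<bar>) \<le> measure M D powr (1 - 1 / p) * (LINT x:D|M. \<bar>w x\<bar> powr p) powr (1 / p)"
proof -
  define I where "I = (LINT x:D|M. \<bar>w x\<bar> powr p)"
  define \<mu> where "\<mu> = measure M D"
  note tangent = set_integral_abs_le_tangent[OF p D(1,2) _ w, folded I_def \<mu>_def]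
  have "0 \<le> I"
    unfolding I_def set_lebesgue_integral_def by (rule integral_nonneg_AE) simp
  show ?thesis
  proof (cases "I = 0")
    case True
    have "(LINT x:D|M. \<bar>w x\<bar>) \<le> 0"
    proof (rule field_le_epsilon)
      fix e :: real assume e: "0 < e"
      have "(LINT x:D|M. \<bar>w x\<bar>) \<le> (1 - 1 / p) * e"
        using tangent[of "e / \<mu>"] e D(3) True by (simp add: \<mu>_def)
      also have "\<dots> \<le> e"
        using e p by (simp add: mult_left_le_one_le)
      finally show "(LINT x:D|M. \<bar>w x\<bar>) \<le> 0 + e"
        by simp
    qed
    with True show ?thesis
      by (simp add: I_def)
  next
    case False
    with \<open>0 \<le> I\<close> have "0 < I" by simp
    define K where "K = (I / \<mu>) powr (1 / p)"
    have K0: "0 < K"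
      using \<open>0 < I\<close> D(3) by (simp add: K_def \<mu>_def)
    txt \<open>The optimal tangent point: both terms of the bound become multiples of K * \<mu>.\<close>
    have "I / (p * K powr (p - 1)) = K * \<mu> / p"
    proof -
      have "K powr p = I / \<mu>"
        using \<open>0 < I\<close> D(3) p by (simp add: K_def powr_powr \<mu>_def)
      then have "I = \<mu> * K * K powr (p - 1)"
        using D(3) K0 by (simp add: powr_diff field_simps \<mu>_def)
      then show ?thesis
        using K0 p by (simp add: field_simps)
    qed
    then have "(LINT x:D|M. \<bar>w x\<bar>) \<le> K * \<mu>"
      using tangent[OF K0] p by (simp add: field_simps)
    also have "K * \<mu> = I powr (1 / p) * (\<mu> / \<mu> powr (1 / p))"
      using \<open>0 < I\<close> D(3) by (simp add: K_def powr_divide \<mu>_def)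
    also have "\<mu> / \<mu> powr (1 / p) = \<mu> powr (1 - 1 / p)"
      using D(3) by (simp add: powr_diff \<mu>_def)
    finally show ?thesis
      by (simp add: I_def \<mu>_def mult.commute)
  qed
qed

lemma set_integral_mono_subset:
  fixes f :: "'a \<Rightarrow> real"
  assumes f: "set_integrable M B f" and A: "A \<in> sets M" "A \<subseteq> B" and nonneg: "\<And>x. x \<in> B \<Longrightarrow> 0 \<le> f x"
  shows "(LINT x:A|M. f x) \<le> (LINT x:B|M. f x)"
  unfolding set_lebesgue_integral_def
proof (rule integral_mono)
  show "integrable M (\<lambda>x. indicator A x *\<^sub>R f x)"
    using set_integrable_subset[OF f A] unfolding set_integrable_def .
  show "integrable M (\<lambda>x. indicator B x *\<^sub>R f x)"
    using f unfolding set_integrable_def .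
qed (use A(2) nonneg in \<open>auto simp: indicator_def\<close>)

lemma set_integrable_continuous_on_compact:
  fixes f :: "'a::euclidean_space \<Rightarrow> real"
  assumes "compact S" "continuous_on S f"
  shows "set_integrable lebesgue S f"
  using borel_integrable_compact[OF assms] integrable_completion
  unfolding set_integrable_def by (metis borel_measurable_integrable sets_lborel)

lemma avg_minus_le_nLp_norm:
  fixes w :: "real^'n::finite \<Rightarrow> real"
  assumes p: "1 \<le> p" and \<Omega>: "\<Omega> \<in> lmeasurable"
    and D: "D \<in> sets lebesgue" "D \<subseteq> \<Omega>" "0 < measure lebesgue D"
    and w: "set_integrable lebesgue \<Omega> w" "set_integrable lebesgue \<Omega> (\<lambda>x. \<bar>w x - m\<bar> powr p)"
  shows "avg D w - m \<le> (measure lebesgue \<Omega> / measure lebesgue D) powr (1 / p) * nLp_norm p \<Omega> (\<lambda>x. w x - m)"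
proof -
  define \<mu> where "\<mu> = measure lebesgue D"
  define I where "I = (LINT x:\<Omega>|lebesgue. \<bar>w x - m\<bar> powr p)"
  have D_fin: "D \<in> lmeasurable"
    using fmeasurableI2[OF \<Omega> D(2,1)] .
  then have D_finite: "emeasure lebesgue D < \<infinity>"
    unfolding fmeasurable_def by blast
  have "\<mu> \<le> measure lebesgue \<Omega>"
    unfolding \<mu>_def using D(2) \<Omega> D_fin by (intro measure_mono_fmeasurable) auto
  then have \<Omega>_pos: "0 < measure lebesgue \<Omega>"
    using D(3) \<mu>_def by linarith
  have wD: "set_integrable lebesgue D w" "set_integrable lebesgue D (\<lambda>x. \<bar>w x - m\<bar> powr p)"
    using w D(1,2) by (auto intro: set_integrable_subset)
  note const = set_integrable_real_const[OF D(1) D_finite]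
  have diff: "set_integrable lebesgue D (\<lambda>x. w x - m)"
    using wD(1) const by (rule set_integral_diff(1))
  have "avg D w - m = (LINT x:D|lebesgue. w x - m) / \<mu>"
    using wD(1) const set_integral_const[OF D(1) less_imp_neq[OF D_finite], of m] D(3)
    by (simp add: avg_def \<mu>_def set_integral_diff(2) diff_divide_distrib)
  also have "\<dots> \<le> (LINT x:D|lebesgue. \<bar>w x - m\<bar>) / \<mu>"
    using set_integral_mono[OF diff set_integrable_abs[OF diff]] D(3) unfolding \<mu>_def
    by (intro divide_right_mono) simp_all
  also have "\<dots> \<le> \<mu> powr (1 - 1 / p) * (LINT x:D|lebesgue. \<bar>w x - m\<bar> powr p) powr (1 / p) / \<mu>"
    using set_integral_abs_le_Lp[OF p D(1) D_finite D(3) diff wD(2)] D(3) unfolding \<mu>_def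
    by (intro divide_right_mono) simp_all
  also have "\<dots> \<le> \<mu> powr (1 - 1 / p) * I powr (1 / p) / \<mu>"
  proof -
    have "0 \<le> (LINT x:D|lebesgue. \<bar>w x - m\<bar> powr p)"
      unfolding set_lebesgue_integral_def by (rule integral_nonneg_AE) simp
    moreover have "(LINT x:D|lebesgue. \<bar>w x - m\<bar> powr p) \<le> I"
      unfolding I_def using w(2) D(1,2) by (rule set_integral_mono_subset) simp
    ultimately have "(LINT x:D|lebesgue. \<bar>w x - m\<bar> powr p) powr (1 / p) \<le> I powr (1 / p)"
      using p by (intro powr_mono2) auto
    then show ?thesis
      using D(3) unfolding \<mu>_def by (simp add: divide_right_mono mult_left_mono)
  qed
  also have "\<dots> = (measure lebesgue \<Omega> / \<mu>) powr (1 / p) * (I / measure lebesgue \<Omega>) powr (1 / p)"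
    using D(3) \<Omega>_pos unfolding \<mu>_def
    by (simp add: powr_divide powr_diff field_simps)
  finally show ?thesis
    by (simp add: nLp_norm_def I_def \<mu>_def)
qed

section \<open>Mean value estimates for subsolutions\<close>

lemma L2_loc_scale: "L2_loc \<Omega> f \<Longrightarrow> L2_loc \<Omega> (\<lambda>x. \<sigma> * f x)"
  unfolding L2_loc_def power_mult_distrib by (auto intro: set_integrable_mult_right)

lemma H1_loc_grad_scale:
  assumes "H1_loc_grad \<Omega> v g"
  shows "H1_loc_grad \<Omega> (\<lambda>x. \<sigma> * v x) (\<lambda>x. \<sigma> *\<^sub>R g x)"
  using assms unfolding H1_loc_grad_def by (auto simp: L2_loc_scale mult.assoc)

lemma weak_solution_imp_subsolution_scale:
  assumes "weak_solution A \<Omega> v"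
  shows "weak_subsolution A \<Omega> (\<lambda>x. \<sigma> * v x)"
proof -
  obtain g where g: "H1_loc_grad \<Omega> v g"
    "\<And>\<phi>. test_fun \<Omega> \<phi> \<Longrightarrow> (LINT x:\<Omega>|lebesgue. (A x *v g x) \<bullet> grad \<phi> x) = 0"
    using assms unfolding weak_solution_def by blast
  have "(LINT x:\<Omega>|lebesgue. (A x *v (\<sigma> *\<^sub>R g x)) \<bullet> grad \<phi> x) = 0" if "test_fun \<Omega> \<phi>" for \<phi>
    using g(2)[OF that] by (simp add: matrix_vector_mult_scaleR)
  then show ?thesis
    unfolding weak_subsolution_def using H1_loc_grad_scale[OF g(1)] by fastforce
qed

lemma le_infdist_frontier:
  fixes S :: "'a::metric_space set"
  assumes "ball x t \<subseteq> S" "frontier S \<noteq> {}"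
  shows "t \<le> infdist x (frontier S)"
  unfolding infdist_notempty[OF assms(2)]
proof (rule cINF_greatest[OF assms(2)])
  fix a assume "a \<in> frontier S"
  then have "a \<notin> interior S"
    by (simp add: frontier_def)
  then have "a \<notin> ball x t"
    using interior_maximal[OF assms(1) open_ball] by blast
  then show "t \<le> dist x a"
    by simp
qed

lemma mean_value_property_at:
  fixes A :: "real^'n::finite \<Rightarrow> real^'n^'n" and \<Omega> :: "(real^'n) set"
  assumes mvp: "mean_value_property A \<Omega> c C" and \<Omega>: "bounded \<Omega>"
    and x0: "ball x0 t \<subseteq> \<Omega>" and r: "0 < r" "C * r < t"
  obtains D where "D \<in> sets lebesgue" "ball x0 (c * r) \<subseteq> D" "D \<subseteq> \<Omega>"
    "\<And>w. continuous_on \<Omega> w \<Longrightarrow> weak_subsolution A \<Omega> w \<Longrightarrow> w x0 \<le> avg D w"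
proof -
  have c: "0 < c" "c \<le> C"
    using mvp unfolding mean_value_property_def by auto
  then have "0 < C * r"
    using r by simp
  then have "x0 \<in> \<Omega>"
    using x0 r(2) by auto
  then obtain D :: "real \<Rightarrow> (real^'n) set" where
    D_ball: "\<And>r. 0 < r \<and> r < infdist x0 (frontier \<Omega>) / C \<Longrightarrow>
        D r \<in> sets lebesgue \<and> ball x0 (c * r) \<subseteq> D r \<and> D r \<subseteq> ball x0 (C * r)" and
    D_mean: "\<And>w. continuous_on \<Omega> w \<and> weak_subsolution A \<Omega> w \<Longrightarrow>
        (\<forall>r \<rho>. 0 < r \<and> r < \<rho> \<and> \<rho> < infdist x0 (frontier \<Omega>) / C \<longrightarrow>
           w x0 \<le> avg (D r) w \<and> avg (D r) w \<le> avg (D \<rho>) w)"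
    using mvp unfolding mean_value_property_def by metis
  have "frontier \<Omega> \<noteq> {}"
    using \<open>x0 \<in> \<Omega>\<close> \<Omega> by (intro frontier_not_empty) auto
  then have r_less: "r < infdist x0 (frontier \<Omega>) / C"
    using le_infdist_frontier[OF x0] r c by (simp add: field_simps)
  then obtain \<rho> where "r < \<rho>" "\<rho> < infdist x0 (frontier \<Omega>) / C"
    using dense by blast
  then have "w x0 \<le> avg (D r) w" if "continuous_on \<Omega> w" "weak_subsolution A \<Omega> w" for w
    using D_mean that r by blast
  moreover have "D r \<in> sets lebesgue" "ball x0 (c * r) \<subseteq> D r" "D r \<subseteq> \<Omega>"
    using D_ball[of r] r r_less x0 subset_ball[of "C * r" t x0] by auto
  ultimately show thesis
    using that[of "D r"] by blast
qed

lemma measure_ratio_le_isodiametric: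
  fixes \<Omega> D :: "'a::euclidean_space set"
  assumes \<Omega>: "open \<Omega>" "bounded \<Omega>" and D: "D \<in> sets lebesgue" "ball x0 \<rho> \<subseteq> D" "D \<subseteq> \<Omega>" and \<rho>: "0 < \<rho>"
  shows "0 < measure lebesgue D" "measure lebesgue \<Omega> / measure lebesgue D \<le> (diameter \<Omega> / (2 * \<rho>)) ^ DIM('a)"
proof -
  let ?\<omega> = "unit_ball_vol (real DIM('a))"
  have ball_le: "?\<omega> * \<rho> ^ DIM('a) \<le> measure lebesgue D"
    using measure_mono_fmeasurable[OF D(2) _ fmeasurableI2[OF lmeasurable_open[OF \<Omega>(2,1)] D(3,1)]] \<rho>
      content_ball[of \<rho> x0] by simp
  moreover have "0 < ?\<omega> * \<rho> ^ DIM('a)"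
    using \<rho> by simp
  ultimately show D_pos: "0 < measure lebesgue D"
    by linarith
  have "measure lebesgue \<Omega> / measure lebesgue D \<le> (?\<omega> * (diameter \<Omega> / 2) ^ DIM('a)) / (?\<omega> * \<rho> ^ DIM('a))"
    using isodiametric_inequality[OF \<Omega>] ball_le D_pos \<rho> diameter_ge_0[OF \<Omega>(2)] by (intro frac_le) auto
  also have "\<dots> = (diameter \<Omega> / (2 * \<rho>)) ^ DIM('a)"
    using \<rho> unit_ball_vol_pos[of "real DIM('a)", THEN less_imp_neq]
    by (simp add: power_divide power_mult_distrib field_simps)
  finally show "measure lebesgue \<Omega> / measure lebesgue D \<le> (diameter \<Omega> / (2 * \<rho>)) ^ DIM('a)" .
qed

lemma subsolution_deviation_le_radius:
  fixes A :: "real^'n::finite \<Rightarrow> real^'n^'n" and \<Omega> :: "(real^'n) set" and w :: "real^'n \<Rightarrow> real"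
  assumes mvp: "mean_value_property A \<Omega> c C" and \<Omega>: "open \<Omega>" "bounded \<Omega>"
    and w: "continuous_on (closure \<Omega>) w" "weak_subsolution A \<Omega> w"
    and x0: "ball x0 t \<subseteq> \<Omega>" and p: "1 \<le> p" and r: "0 < r" "C * r < t"
  shows "w x0 - m \<le> (diameter \<Omega> / (2 * c * r)) powr (CARD('n) / p) * nLp_norm p \<Omega> (\<lambda>x. w x - m)"
proof -
  let ?N = "CARD('n)"
  have c: "0 < c"
    using mvp unfolding mean_value_property_def by auto
  obtain D where D: "D \<in> sets lebesgue" "ball x0 (c * r) \<subseteq> D" "D \<subseteq> \<Omega>"
    and mean: "w x0 \<le> avg D w"
    using mean_value_property_at[OF mvp \<Omega>(2) x0 r] w(2) continuous_on_subset[OF w(1) closure_subset] by metis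
  have D_pos: "0 < measure lebesgue D"
    and ratio: "measure lebesgue \<Omega> / measure lebesgue D \<le> (diameter \<Omega> / (2 * (c * r))) ^ ?N"
    using measure_ratio_le_isodiametric[OF \<Omega> D] c r by simp_all
  have integrable: "set_integrable lebesgue \<Omega> f" if "continuous_on (closure \<Omega>) f" for f :: "real^'n \<Rightarrow> real"
    using set_integrable_continuous_on_compact[OF compact_closure[THEN iffD2, OF \<Omega>(2)] that]
      closure_subset lmeasurable_open[OF \<Omega>(2,1)] by (blast intro: set_integrable_subset fmeasurableD)
  have "w x0 - m \<le> avg D w - m"
    using mean by simp
  also have "\<dots> \<le> (measure lebesgue \<Omega> / measure lebesgue D) powr (1 / p) * nLp_norm p \<Omega> (\<lambda>x. w x - m)"
  proof (rule avg_minus_le_nLp_norm[OF p lmeasurable_open[OF \<Omega>(2,1)] D(1,3) D_pos])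
    show "set_integrable lebesgue \<Omega> w"
      using w(1) by (rule integrable)
    have "continuous_on (closure \<Omega>) (\<lambda>x. \<bar>w x - m\<bar> powr p)"
      using w(1) p by (intro continuous_on_powr' continuous_intros) auto
    then show "set_integrable lebesgue \<Omega> (\<lambda>x. \<bar>w x - m\<bar> powr p)"
      by (rule integrable)
  qed
  also have "\<dots> \<le> (diameter \<Omega> / (2 * c * r)) powr (?N / p) * nLp_norm p \<Omega> (\<lambda>x. w x - m)"
  proof (rule mult_right_mono)
    have "(measure lebesgue \<Omega> / measure lebesgue D) powr (1 / p) \<le> ((diameter \<Omega> / (2 * c * r)) ^ ?N) powr (1 / p)"
      using ratio D_pos p by (intro powr_mono2) (auto simp: mult.assoc)
    also have "(diameter \<Omega> / (2 * c * r)) ^ ?N = (diameter \<Omega> / (2 * c * r)) powr ?N"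
      using c r diameter_ge_0[OF \<Omega>(2)] by (intro powr_realpow'[symmetric]) auto
    also have "(\<dots>) powr (1 / p) = (diameter \<Omega> / (2 * c * r)) powr (?N / p)"
      by (simp add: powr_powr)
    finally show "(measure lebesgue \<Omega> / measure lebesgue D) powr (1 / p)
        \<le> (diameter \<Omega> / (2 * c * r)) powr (?N / p)" .
  qed (simp add: nLp_norm_def)
  finally show ?thesis .
qed

lemma subsolution_deviation_le:
  fixes A :: "real^'n::finite \<Rightarrow> real^'n^'n" and \<Omega> :: "(real^'n) set" and w :: "real^'n \<Rightarrow> real"
  assumes mvp: "mean_value_property A \<Omega> c C" and \<Omega>: "open \<Omega>" "bounded \<Omega>"
    and w: "continuous_on (closure \<Omega>) w" "weak_subsolution A \<Omega> w"
    and x0: "ball x0 t \<subseteq> \<Omega>" "0 < t" and p: "1 \<le> p"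
  shows "w x0 - m \<le> (C * diameter \<Omega> / (2 * c * t)) powr (CARD('n) / p) * nLp_norm p \<Omega> (\<lambda>x. w x - m)"
proof (rule field_le_mult_one_interval)
  fix z :: real assume z: "0 < z" "z < 1"
  let ?N = "real CARD('n)" and ?X = "C * diameter \<Omega> / (2 * c * t)"
  have c: "0 < c" "c \<le> C"
    using mvp unfolding mean_value_property_def by auto
  txt \<open>The radius is chosen so that the loss factor in the estimate at radius r is exactly 1/z.\<close>
  define r where "r = z powr (p / ?N) * t / C"
  have "z powr (p / ?N) < 1"
    using powr_less_mono2[of "p / ?N" z 1] z p by simp
  then have r: "0 < r" "C * r < t"
    using z x0(2) c by (simp_all add: r_def)
  have "diameter \<Omega> / (2 * c * r) = ?X / z powr (p / ?N)"
    using c z by (simp add: r_def field_simps)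
  moreover have "(?X / z powr (p / ?N)) powr (?N / p) = ?X powr (?N / p) / (z powr (p / ?N)) powr (?N / p)"
    by (rule powr_divide)
  moreover have "(z powr (p / ?N)) powr (?N / p) = z"
    using z p by (simp add: powr_powr)
  ultimately have "(diameter \<Omega> / (2 * c * r)) powr (?N / p) = ?X powr (?N / p) / z"
    by simp
  then have "w x0 - m \<le> ?X powr (?N / p) / z * nLp_norm p \<Omega> (\<lambda>x. w x - m)"
    using subsolution_deviation_le_radius[OF mvp \<Omega> w x0(1) p r] by simp
  then show "z * (w x0 - m) \<le> ?X powr (?N / p) * nLp_norm p \<Omega> (\<lambda>x. w x - m)"
    using z by (simp add: field_simps)
qed

lemma solution_abs_deviation_le:
  fixes A :: "real^'n::finite \<Rightarrow> real^'n^'n" and \<Omega> :: "(real^'n) set" and v :: "real^'n \<Rightarrow> real"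
  assumes mvp: "mean_value_property A \<Omega> c C" and \<Omega>: "open \<Omega>" "bounded \<Omega>"
    and v: "continuous_on (closure \<Omega>) v" "weak_solution A \<Omega> v"
    and x0: "ball x0 t \<subseteq> \<Omega>" "0 < t" and p: "1 \<le> p"
  shows "\<bar>v x0 - m\<bar> \<le> (C * diameter \<Omega> / (2 * c * t)) powr (CARD('n) / p) * nLp_norm p \<Omega> (\<lambda>x. v x - m)"
proof -
  have "\<sigma> * (v x0 - m) \<le> (C * diameter \<Omega> / (2 * c * t)) powr (CARD('n) / p) * nLp_norm p \<Omega> (\<lambda>x. v x - m)"
    if "\<bar>\<sigma>\<bar> = 1" for \<sigma>
  proof -
    have "continuous_on (closure \<Omega>) (\<lambda>x. \<sigma> * v x)"
      using v(1) by (intro continuous_intros)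
    from subsolution_deviation_le[OF mvp \<Omega> this weak_solution_imp_subsolution_scale[OF v(2)] x0 p]
    have "\<sigma> * v x0 - \<sigma> * m \<le> (C * diameter \<Omega> / (2 * c * t)) powr (CARD('n) / p)
        * nLp_norm p \<Omega> (\<lambda>x. \<sigma> * v x - \<sigma> * m)" .
    moreover have "nLp_norm p \<Omega> (\<lambda>x. \<sigma> * v x - \<sigma> * m) = nLp_norm p \<Omega> (\<lambda>x. v x - m)"
      unfolding nLp_norm_def by (simp add: abs_mult that flip: right_diff_distrib)
    ultimately show ?thesis
      by (simp add: right_diff_distrib)
  qed
  from this[of 1] this[of "-1"] show ?thesis
    by (simp add: abs_le_iff)
qed

section \<open>Hoelder seminorm and boundary oscillation\<close>

lemma holder_seminorm_bound:
  assumes v: "holder_on \<alpha> (closure \<Omega>) v" and xy: "x \<in> closure \<Omega>" "y \<in> closure \<Omega>"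
  shows "(diameter \<Omega> / 2) powr \<alpha> * \<bar>v x - v y\<bar> \<le> holder_seminorm \<alpha> \<Omega> v * dist x y powr \<alpha>"
proof (cases "x = y")
  case True
  then show ?thesis by simp
next
  case False
  let ?Q = "{(diameter \<Omega> / 2) powr \<alpha> * \<bar>v x1 - v x2\<bar> / dist x1 x2 powr \<alpha> | x1 x2.
      x1 \<in> closure \<Omega> \<and> x2 \<in> closure \<Omega> \<and> x1 \<noteq> x2}"
  obtain L where L: "\<And>x y. x \<in> closure \<Omega> \<Longrightarrow> y \<in> closure \<Omega> \<Longrightarrow> \<bar>v x - v y\<bar> \<le> L * dist x y powr \<alpha>"
    using v unfolding holder_on_def by blast
  have Q_bdd: "bdd_above ?Q"
  proof (rule bdd_aboveI)
    fix q assume "q \<in> ?Q"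
    then obtain x1 x2 where "x1 \<in> closure \<Omega>" "x2 \<in> closure \<Omega>" "x1 \<noteq> x2"
      and q: "q = (diameter \<Omega> / 2) powr \<alpha> * (\<bar>v x1 - v x2\<bar> / dist x1 x2 powr \<alpha>)"
      by auto
    then have "\<bar>v x1 - v x2\<bar> / dist x1 x2 powr \<alpha> \<le> L"
      using L by (simp add: divide_le_eq)
    then show "q \<le> (diameter \<Omega> / 2) powr \<alpha> * L"
      unfolding q by (intro mult_left_mono) auto
  qed
  have "(diameter \<Omega> / 2) powr \<alpha> * \<bar>v x - v y\<bar> / dist x y powr \<alpha> \<in> ?Q"
    using xy False by blast
  then have "(diameter \<Omega> / 2) powr \<alpha> * \<bar>v x - v y\<bar> / dist x y powr \<alpha> \<le> holder_seminorm \<alpha> \<Omega> v"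
    unfolding holder_seminorm_def by (rule cSup_upper[OF _ Q_bdd])
  then show ?thesis
    using False by (simp add: divide_le_eq)
qed

lemma holder_seminorm_nonneg:
  assumes "holder_on \<alpha> (closure \<Omega>) v" "x \<in> closure \<Omega>" "y \<in> closure \<Omega>" "x \<noteq> y"
  shows "0 \<le> holder_seminorm \<alpha> \<Omega> v"
proof -
  have "0 \<le> (diameter \<Omega> / 2) powr \<alpha> * \<bar>v x - v y\<bar>"
    by simp
  also have "\<dots> \<le> holder_seminorm \<alpha> \<Omega> v * dist x y powr \<alpha>"
    using holder_seminorm_bound[OF assms(1-3)] .
  finally show ?thesis
    using assms(4) by (simp add: zero_le_mult_iff)
qed

lemma abs_diff_le_holder_seminorm:
  assumes "holder_on \<alpha> (closure \<Omega>) v" "x \<in> closure \<Omega>" "y \<in> closure \<Omega>" "0 < diameter \<Omega>"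
  shows "\<bar>v x - v y\<bar> \<le> holder_seminorm \<alpha> \<Omega> v * (2 * dist x y / diameter \<Omega>) powr \<alpha>"
proof -
  have "(diameter \<Omega> / 2) powr \<alpha> * \<bar>v x - v y\<bar> \<le> holder_seminorm \<alpha> \<Omega> v * dist x y powr \<alpha>"
    using holder_seminorm_bound[OF assms(1-3)] .
  moreover have "dist x y powr \<alpha> = (diameter \<Omega> / 2) powr \<alpha> * (2 * dist x y / diameter \<Omega>) powr \<alpha>"
    using assms(4) by (simp add: powr_mult[symmetric])
  ultimately show ?thesis
    using assms(4) by (simp add: mult.left_commute[of "(diameter \<Omega> / 2) powr \<alpha>"])
qed

lemma cSup_minus_cInf_le:
  fixes S :: "real set"
  assumes "S \<noteq> {}" "\<And>a b. a \<in> S \<Longrightarrow> b \<in> S \<Longrightarrow> a - b \<le> L"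
  shows "Sup S - Inf S \<le> L"
proof -
  have "a - L \<le> Inf S" if "a \<in> S" for a
    using assms by (intro cInf_greatest) (auto simp: that algebra_simps)
  then have "Sup S \<le> Inf S + L"
    using assms(1) by (intro cSup_least) (auto simp: algebra_simps)
  then show ?thesis
    by simp
qed

lemma oscillation_le_twice_deviation:
  fixes v :: "'a \<Rightarrow> real"
  assumes "S \<noteq> {}" "\<And>z. z \<in> S \<Longrightarrow> \<bar>v z - m\<bar> \<le> E"
  shows "Sup (v ` S) - Inf (v ` S) \<le> 2 * E"
proof (rule cSup_minus_cInf_le)
  fix a b assume "a \<in> v ` S" "b \<in> v ` S"
  then obtain z1 z2 where "z1 \<in> S" "z2 \<in> S" "a = v z1" "b = v z2"
    by blast
  with assms(2)[of z1] assms(2)[of z2] show "a - b \<le> 2 * E"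
    by (simp add: abs_le_iff)
qed (use assms(1) in simp)

lemma frontier_oscillation_le_holder_seminorm:
  assumes v: "holder_on \<alpha> (closure \<Omega>) v" and \<Omega>: "bounded \<Omega>" "0 < diameter \<Omega>" "frontier \<Omega> \<noteq> {}"
    and \<alpha>: "0 < \<alpha>" and H: "0 \<le> holder_seminorm \<alpha> \<Omega> v"
  shows "Sup (v ` frontier \<Omega>) - Inf (v ` frontier \<Omega>) \<le> 2 powr \<alpha> * holder_seminorm \<alpha> \<Omega> v"
proof (rule cSup_minus_cInf_le)
  fix a b assume "a \<in> v ` frontier \<Omega>" "b \<in> v ` frontier \<Omega>"
  then obtain z1 z2 where z: "z1 \<in> closure \<Omega>" "z2 \<in> closure \<Omega>" "a = v z1" "b = v z2"
    by (auto simp: frontier_def)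
  have "dist z1 z2 \<le> diameter \<Omega>"
    using diameter_bounded_bound[OF bounded_closure[OF \<Omega>(1)] z(1,2)] diameter_closure[OF \<Omega>(1)] by simp
  then have "(2 * dist z1 z2 / diameter \<Omega>) powr \<alpha> \<le> 2 powr \<alpha>"
    using \<Omega>(2) \<alpha> by (intro powr_mono2) (auto simp: divide_le_eq)
  then have "\<bar>v z1 - v z2\<bar> \<le> holder_seminorm \<alpha> \<Omega> v * 2 powr \<alpha>"
    using abs_diff_le_holder_seminorm[OF v z(1,2) \<Omega>(2)] H by (meson mult_left_mono order_trans)
  then show "a - b \<le> 2 powr \<alpha> * holder_seminorm \<alpha> \<Omega> v"
    using z by (simp add: mult.commute)
qed (use \<Omega>(3) in simp)

lemma interior_sphere_inner_ball:
  fixes \<Omega> :: "(real^'n::finite) set"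
  assumes "interior_sphere_radius \<Omega> r" "z \<in> frontier \<Omega>" "0 < t" "t \<le> r"
  obtains x where "dist z x = t" "ball x t \<subseteq> \<Omega>"
proof -
  obtain y where y: "ball y r \<subseteq> \<Omega>" "closure (ball y r) \<inter> frontier \<Omega> = {z}" and r: "0 < r"
    using assms(1,2) unfolding interior_sphere_radius_def by blast
  have "z \<in> cball y r"
    using y(2) r by auto
  moreover have "z \<notin> ball y r"
    using assms(2) interior_maximal[OF y(1) open_ball] by (auto simp: frontier_def)
  ultimately have dyz: "dist y z = r"
    by simp
  define x where "x = z + (t / r) *\<^sub>R (y - z)"
  have "dist z x = t"
    using dyz r assms(3) by (simp add: x_def dist_norm norm_minus_commute)
  moreover have "dist y x = r - t"
  proof -
    have "y - x = (1 - t / r) *\<^sub>R (y - z)"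
      by (simp add: x_def algebra_simps)
    then have "dist y x = \<bar>1 - t / r\<bar> * dist y z"
      by (simp add: dist_norm)
    moreover have "0 \<le> 1 - t / r"
      using r assms(4) by simp
    ultimately show ?thesis
      using dyz r by (simp add: field_simps)
  qed
  then have "ball x t \<subseteq> ball y r"
  proof (intro subsetI)
    fix w assume "w \<in> ball x t"
    then show "w \<in> ball y r"
      using dist_triangle[of y w x] \<open>dist y x = r - t\<close> by simp
  qed
  ultimately show thesis
    using that y(1) by blast
qed

lemma interior_sphere_diameter_pos:
  fixes \<Omega> :: "(real^'n::finite) set"
  assumes "interior_sphere_radius \<Omega> r" "bounded \<Omega>" "z \<in> frontier \<Omega>"
  shows "0 < diameter \<Omega>"
proof -
  obtain y where "ball y r \<subseteq> \<Omega>" "0 < r"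
    using assms(1,3) unfolding interior_sphere_radius_def by blast
  then show ?thesis
    using diameter_subset[of "ball y r" \<Omega>] assms(2) by simp
qed

lemma boundary_deviation_le:
  fixes A :: "real^'n::finite \<Rightarrow> real^'n^'n" and \<Omega> :: "(real^'n) set" and v :: "real^'n \<Rightarrow> real"
  assumes mvp: "mean_value_property A \<Omega> c C" and \<Omega>: "open \<Omega>" "bounded \<Omega>"
    and r\<^sub>i: "interior_sphere_radius \<Omega> r\<^sub>i" and v: "v \<in> Sigma_set A \<alpha> \<Omega>" and p: "1 \<le> p"
    and z: "z \<in> frontier \<Omega>" and d: "0 < diameter \<Omega>" and s: "0 < s" "s \<le> 2 * r\<^sub>i / diameter \<Omega>"
  shows "\<bar>v z - avg \<Omega> v\<bar> \<le> holder_seminorm \<alpha> \<Omega> v * s powr \<alpha>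
      + (C / c) powr (CARD('n) / p) * nLp_norm p \<Omega> (\<lambda>x. v x - avg \<Omega> v) * s powr (- (CARD('n) / p))"
proof -
  let ?m = "avg \<Omega> v" and ?N = "real CARD('n)"
  have holder: "holder_on \<alpha> (closure \<Omega>) v" and sol: "weak_solution A \<Omega> v"
    using v unfolding Sigma_set_def by auto
  have c: "0 < c" "c \<le> C"
    using mvp unfolding mean_value_property_def by auto
  define t where "t = s * diameter \<Omega> / 2"
  have t: "0 < t" "t \<le> r\<^sub>i"
    using s d by (simp_all add: t_def field_simps)
  obtain x0 where x0: "dist z x0 = t" "ball x0 t \<subseteq> \<Omega>"
    using interior_sphere_inner_ball[OF r\<^sub>i z t] by blast
  have "x0 \<in> \<Omega>"
    using x0(2) t(1) by auto
  then have "x0 \<in> closure \<Omega>" "z \<in> closure \<Omega>"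
    using z closure_subset by (auto simp: frontier_def)
  moreover have "2 * dist z x0 / diameter \<Omega> = s"
    using x0(1) d by (simp add: t_def field_simps)
  ultimately have "\<bar>v z - v x0\<bar> \<le> holder_seminorm \<alpha> \<Omega> v * s powr \<alpha>"
    using abs_diff_le_holder_seminorm[OF holder _ _ d, of z x0] by simp
  moreover have "\<bar>v x0 - ?m\<bar> \<le> (C / c) powr (?N / p) * nLp_norm p \<Omega> (\<lambda>x. v x - ?m) * s powr (- (?N / p))"
  proof -
    have "C * diameter \<Omega> / (2 * c * t) = (C / c) / s"
      using c d s by (simp add: t_def field_simps)
    then have "(C * diameter \<Omega> / (2 * c * t)) powr (?N / p) = (C / c) powr (?N / p) * s powr (- (?N / p))"
      by (simp only: powr_divide powr_minus_divide) simp
    moreover have "continuous_on (closure \<Omega>) v"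
      using holder unfolding holder_on_def by blast
    ultimately show ?thesis
      using solution_abs_deviation_le[OF mvp \<Omega> _ sol x0(2) t(1) p, of ?m] by (simp add: mult_ac)
  qed
  ultimately show ?thesis
    by linarith
qed

section \<open>Optimising the two-term bound\<close>

lemma power_sum_at_balance:
  fixes \<alpha> \<beta> H B :: real
  assumes \<alpha>: "0 < \<alpha>" and \<beta>: "0 < \<beta>" and H: "0 < H" and B: "0 < B"
  defines "G \<equiv> (\<beta> / \<alpha>) powr (\<alpha> / (\<alpha> + \<beta>)) * H powr (\<beta> / (\<alpha> + \<beta>)) * B powr (\<alpha> / (\<alpha> + \<beta>))"
  defines "s \<equiv> (G / H) powr (1 / \<alpha>)"
  shows "0 < s" "H * s powr \<alpha> = G" "B * s powr (- \<beta>) = \<alpha> / \<beta> * G"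
proof -
  have G: "0 < G"
    using \<alpha> \<beta> H B by (simp add: G_def)
  then show "0 < s"
    using H by (simp add: s_def)
  show "H * s powr \<alpha> = G"
    using G H \<alpha> by (simp add: s_def powr_powr)
  have "ln G = \<alpha> / (\<alpha> + \<beta>) * ln (\<beta> / \<alpha>) + \<beta> / (\<alpha> + \<beta>) * ln H + \<alpha> / (\<alpha> + \<beta>) * ln B"
    using \<alpha> \<beta> H B by (simp add: G_def ln_mult ln_powr)
  moreover have cancel: "(\<alpha> + \<beta>) * (a / (\<alpha> + \<beta>) * x) = a * x" for a x
    using \<alpha> \<beta> by simp
  ultimately have ln_G: "(\<alpha> + \<beta>) * ln G = \<alpha> * ln (\<beta> / \<alpha>) + \<beta> * ln H + \<alpha> * ln B"
    by (simp only: distrib_left cancel)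
  have ln_s: "\<alpha> * ln s = ln G - ln H"
    using G H \<alpha> by (simp add: s_def ln_powr ln_div)
  have ln_G': "\<alpha> * ln G + \<beta> * ln G = \<alpha> * ln \<beta> - \<alpha> * ln \<alpha> + \<beta> * ln H + \<alpha> * ln B"
    using ln_G \<alpha> \<beta> by (simp add: ln_div algebra_simps)
  from ln_s have ln_s': "\<alpha> * (\<beta> * ln s) = \<beta> * ln G - \<beta> * ln H"
    by (metis mult.left_commute right_diff_distrib)
  have "\<alpha> * ln (B * s powr (- \<beta>)) = \<alpha> * ln (\<alpha> / \<beta> * G)"
    using \<alpha> \<beta> B G \<open>0 < s\<close> by (simp add: ln_mult ln_powr ln_div algebra_simps ln_s') (use ln_G' in linarith)
  then show "B * s powr (- \<beta>) = \<alpha> / \<beta> * G"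
    using \<alpha> \<beta> B G \<open>0 < s\<close> by simp
qed

lemma nonpos_if_le_power:
  fixes \<Phi> K \<alpha> s\<^sub>0 :: real
  assumes \<alpha>: "0 < \<alpha>" and K: "0 < K" and s\<^sub>0: "0 < s\<^sub>0"
    and le: "\<And>s. 0 < s \<Longrightarrow> s \<le> s\<^sub>0 \<Longrightarrow> \<Phi> \<le> K * s powr \<alpha>"
  shows "\<Phi> \<le> 0"
proof (rule ccontr)
  assume "\<not> \<Phi> \<le> 0"
  define s where "s = min s\<^sub>0 ((\<Phi> / (2 * K)) powr (1 / \<alpha>))"
  have "0 < s"
    using s\<^sub>0 \<open>\<not> \<Phi> \<le> 0\<close> K by (simp add: s_def)
  have "s powr \<alpha> \<le> ((\<Phi> / (2 * K)) powr (1 / \<alpha>)) powr \<alpha>"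
    using \<open>0 < s\<close> \<alpha> by (intro powr_mono2) (auto simp: s_def)
  also have "\<dots> = \<Phi> / (2 * K)"
    using \<alpha> \<open>\<not> \<Phi> \<le> 0\<close> K by (simp add: powr_powr)
  finally have "K * s powr \<alpha> \<le> \<Phi> / 2"
    using K by (simp add: field_simps)
  moreover have "\<Phi> \<le> K * s powr \<alpha>"
    using le[OF \<open>0 < s\<close>] by (simp add: s_def)
  ultimately show False
    using \<open>\<not> \<Phi> \<le> 0\<close> by simp
qed

lemma two_term_power_bound_pos:
  fixes \<Phi> \<alpha> \<beta> H B s\<^sub>0 :: real
  assumes \<alpha>: "0 < \<alpha>" and \<beta>: "0 < \<beta>" and H: "0 < H" and B: "0 < B" and s\<^sub>0: "0 < s\<^sub>0"
    and large: "\<Phi> \<le> 2 powr \<alpha> * H"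
    and small: "\<And>s. 0 < s \<Longrightarrow> s \<le> s\<^sub>0 \<Longrightarrow> \<Phi> \<le> 2 * (H * s powr \<alpha> + B * s powr (- \<beta>))"
  shows "\<Phi> \<le> max (2 * (1 + \<alpha> / \<beta>)) ((2 / s\<^sub>0) powr \<alpha>)
      * ((\<beta> / \<alpha>) powr (\<alpha> / (\<alpha> + \<beta>)) * H powr (\<beta> / (\<alpha> + \<beta>)) * B powr (\<alpha> / (\<alpha> + \<beta>)))"
    (is "_ \<le> ?K * ?G")
proof -
  txt \<open>Either the minimiser s of H s powr alpha + B s powr -beta is admissible, or it exceeds
    s0 and the bound 2 powr alpha H already suffices.\<close>
  define s where "s = (?G / H) powr (1 / \<alpha>)"
  note balance = power_sum_at_balance[OF \<alpha> \<beta> H B, folded s_def]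
  have "0 < ?G"
    using H B \<alpha> \<beta> by simp
  show ?thesis
  proof (cases "s \<le> s\<^sub>0")
    case True
    have "\<Phi> \<le> 2 * (H * s powr \<alpha> + B * s powr (- \<beta>))"
      using small[OF balance(1) True] .
    also have "\<dots> = 2 * (1 + \<alpha> / \<beta>) * ?G"
      using balance(2,3) by (simp add: algebra_simps)
    also have "\<dots> \<le> ?K * ?G"
      using \<open>0 < ?G\<close> by (intro mult_right_mono) auto
    finally show ?thesis .
  next
    case False
    have "\<Phi> \<le> (2 / s\<^sub>0) powr \<alpha> * (s\<^sub>0 powr \<alpha> * H)"
      using large s\<^sub>0 by (simp add: powr_divide)
    also have "\<dots> \<le> (2 / s\<^sub>0) powr \<alpha> * (s powr \<alpha> * H)"
      using False s\<^sub>0 \<alpha> H by (intro mult_left_mono mult_right_mono powr_mono2) auto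
    also have "\<dots> = (2 / s\<^sub>0) powr \<alpha> * ?G"
      using balance(2) by (simp add: mult.commute)
    also have "\<dots> \<le> ?K * ?G"
      using \<open>0 < ?G\<close> by (intro mult_right_mono) auto
    finally show ?thesis .
  qed
qed

lemma two_term_power_bound:
  fixes \<Phi> \<alpha> \<beta> H B s\<^sub>0 :: real
  assumes \<alpha>: "0 < \<alpha>" and \<beta>: "0 < \<beta>" and H: "0 \<le> H" and B: "0 \<le> B" and s\<^sub>0: "0 < s\<^sub>0"
    and large: "\<Phi> \<le> 2 powr \<alpha> * H"
    and small: "\<And>s. 0 < s \<Longrightarrow> s \<le> s\<^sub>0 \<Longrightarrow> \<Phi> \<le> 2 * (H * s powr \<alpha> + B * s powr (- \<beta>))"
  shows "\<Phi> \<le> max (2 * (1 + \<alpha> / \<beta>)) ((2 / s\<^sub>0) powr \<alpha>)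
      * ((\<beta> / \<alpha>) powr (\<alpha> / (\<alpha> + \<beta>)) * H powr (\<beta> / (\<alpha> + \<beta>)) * B powr (\<alpha> / (\<alpha> + \<beta>)))"
proof -
  consider "H = 0" | "0 < H" "B = 0" | "0 < H" "0 < B"
    using H B by linarith
  then show ?thesis
  proof cases
    case 1
    then show ?thesis
      using large \<alpha> \<beta> by simp
  next
    case 2
    then have "\<Phi> \<le> 0"
      using small \<alpha> s\<^sub>0 by (intro nonpos_if_le_power[of \<alpha> "2 * H" s\<^sub>0]) (simp_all add: mult.assoc)
    then show ?thesis
      using 2 \<alpha> \<beta> by simp
  next
    case 3
    then show ?thesis
      using two_term_power_bound_pos[OF \<alpha> \<beta> _ _ s\<^sub>0 large small] by blast
  qed
qed

lemma two_term_power_bound_dimension: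
  fixes \<Phi> \<alpha> p N H M Q s\<^sub>0 :: real
  assumes \<alpha>: "0 < \<alpha>" and p: "0 < p" and N: "0 < N" and H: "0 \<le> H" and M: "0 \<le> M" and Q: "0 < Q"
    and s\<^sub>0: "0 < s\<^sub>0"
    and large: "\<Phi> \<le> 2 powr \<alpha> * H"
    and small: "\<And>s. 0 < s \<Longrightarrow> s \<le> s\<^sub>0 \<Longrightarrow> \<Phi> \<le> 2 * (H * s powr \<alpha> + Q powr (N / p) * M * s powr (- (N / p)))"
  shows "\<Phi> \<le> max (2 * (1 + \<alpha> * p / N)) ((2 / s\<^sub>0) powr \<alpha>)
      * (N / (\<alpha> * p)) powr (\<alpha> * p / (N + \<alpha> * p)) * Q powr (\<alpha> * N / (N + \<alpha> * p))
      * H powr (N / (N + \<alpha> * p)) * M powr (\<alpha> * p / (N + \<alpha> * p))"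
proof -
  have "N / p > 0" "Q powr (N / p) * M \<ge> 0"
    using N p M by simp_all
  note bound = two_term_power_bound[OF \<alpha> this(1) H this(2) s\<^sub>0 large small]
  have exponents: "\<alpha> / (N / p) = \<alpha> * p / N" "N / p / \<alpha> = N / (\<alpha> * p)"
    "\<alpha> / (\<alpha> + N / p) = \<alpha> * p / (N + \<alpha> * p)" "N / p / (\<alpha> + N / p) = N / (N + \<alpha> * p)"
    using \<alpha> p N by (simp_all add: field_simps)
  have "(Q powr (N / p) * M) powr (\<alpha> * p / (N + \<alpha> * p))
      = Q powr (\<alpha> * N / (N + \<alpha> * p)) * M powr (\<alpha> * p / (N + \<alpha> * p))"
    using Q M p by (simp add: powr_mult powr_powr mult.commute)
  with bound show ?thesis
    unfolding exponents by (simp only: mult.assoc mult.commute mult.left_commute)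
qed

theorem theorem2p3:
  fixes A :: "real^'n::finite \<Rightarrow> real^'n^'n"
    and \<Omega> :: "(real^'n) set"
    and v :: "real^'n \<Rightarrow> real"
    and p \<alpha> lam Lam c C r\<^sub>i :: real
  assumes "CARD('n) \<ge> 2"
    and "elliptic_coeffs A lam Lam"
    and "mean_value_property A \<Omega> c C"
    and "1 \<le> p" and "0 < \<alpha>" and "\<alpha> \<le> 1"
    and "bounded_domain \<Omega>" and "C2_boundary \<Omega>"
    and "interior_sphere_radius \<Omega> r\<^sub>i"
    and "v \<in> Sigma_set A \<alpha> \<Omega>"
  shows "Sup (v ` frontier \<Omega>) - Inf (v ` frontier \<Omega>)
     \<le> max (2 * (1 + \<alpha> * p / real CARD('n))) ((diameter \<Omega> / r\<^sub>i) powr \<alpha>)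
        * (real CARD('n) / (\<alpha> * p)) powr (\<alpha> * p / (real CARD('n) + \<alpha> * p))
        * (C / c) powr (\<alpha> * real CARD('n) / (real CARD('n) + \<alpha> * p))
        * holder_seminorm \<alpha> \<Omega> v powr (real CARD('n) / (real CARD('n) + \<alpha> * p))
        * nLp_norm p \<Omega> (\<lambda>x. v x - avg \<Omega> v) powr (\<alpha> * p / (real CARD('n) + \<alpha> * p))"
proof -
  have \<Omega>: "open \<Omega>" "bounded \<Omega>" "\<Omega> \<noteq> {}"
    using assms(7) unfolding bounded_domain_def by auto
  have holder: "holder_on \<alpha> (closure \<Omega>) v"
    using assms(10) unfolding Sigma_set_def by blast
  obtain z where z: "z \<in> frontier \<Omega>"
    using frontier_not_empty[OF \<Omega>(3)] \<Omega>(2) not_bounded_UNIV by blast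
  have d: "0 < diameter \<Omega>"
    using interior_sphere_diameter_pos[OF assms(9) \<Omega>(2) z] .
  obtain y where "y \<in> \<Omega>"
    using \<Omega>(3) by blast
  moreover have "z \<notin> \<Omega>" "z \<in> closure \<Omega>"
    using z \<Omega>(1) by (auto simp: frontier_def interior_open)
  ultimately have H: "0 \<le> holder_seminorm \<alpha> \<Omega> v"
    using closure_subset by (intro holder_seminorm_nonneg[OF holder, of y z]) auto
  have large: "Sup (v ` frontier \<Omega>) - Inf (v ` frontier \<Omega>) \<le> 2 powr \<alpha> * holder_seminorm \<alpha> \<Omega> v"
    using frontier_oscillation_le_holder_seminorm[OF holder \<Omega>(2) d _ assms(5) H] z by blast
  have small: "Sup (v ` frontier \<Omega>) - Inf (v ` frontier \<Omega>) \<le> 2 * (holder_seminorm \<alpha> \<Omega> v * s powr \<alpha>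
      + (C / c) powr (real CARD('n) / p) * nLp_norm p \<Omega> (\<lambda>x. v x - avg \<Omega> v) * s powr - (real CARD('n) / p))"
    if "0 < s" "s \<le> 2 * r\<^sub>i / diameter \<Omega>" for s
    using boundary_deviation_le[OF assms(3) \<Omega>(1,2) assms(9,10,4) _ d that] z
    by (intro oscillation_le_twice_deviation) blast+
  have "0 < p" "0 < real CARD('n)" "0 \<le> nLp_norm p \<Omega> (\<lambda>x. v x - avg \<Omega> v)" "0 < C / c" "0 < 2 * r\<^sub>i / diameter \<Omega>"
    using assms(3,4,9) d by (simp_all add: nLp_norm_def mean_value_property_def interior_sphere_radius_def)
  from two_term_power_bound_dimension[OF assms(5) this(1,2) H this(3,4,5) large small]
  show ?thesis
    using assms(9) by (simp add: interior_sphere_radius_def)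
qed

end
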